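(* Let $q$ be a prime power and let $A$ and $B$ be parity check matrices over $\mathbb{F}_q$ of the Hamming codes $[n_a,k_a,3]_q$ and $[n_b,k_b,3]_q$ respectively, where $n_a=(q^{m_a}-1)/(q-1)\ge3$, $n_b=(q^{m_b}-1)/(q-1)\ge3$, $k_a=n_a-m_a$, $k_b=n_b-m_b$. Let $C$ be the linear code over $\mathbb{F}_q$ with parity check matrix $H=A\otimes B$. Then: (1) $C$ has length $n=n_an_b$, dimension $k=n-m_am_b$ and minimum distance $d=3$; (2) the covering radius of $C$ is $\rho=\min\{m_a,m_b\}$; (3) $C$ is completely transitive, and therefore completely regular.
   Context: $A\otimes B$ denotes the Kronecker product (each entry $a_{r,s}$ of $A$ replaced by the block $a_{r,s}B$). The $q$-ary Hamming code with $m$ check symbols has a parity check matrix of size $m\times(q^m-1)/(q-1)$ whose columns are one nonzero representative of each one-dimensional subspace of $\mathbb{F}_q^m$. The covering radius of $C$ is $\max_{{\bf v}\in\mathbb{F}_q^n}\min_{{\bf c}\in C}\mathrm{wt}({\bf v}-{\bf c})$. The automorphism group $\mathrm{Aut}(C)$ consists of all $n\times n$ monomial matrices $M$ over $\mathbb{F}_q$ (exactly one nonzero entry in each row and column) with ${\bf c}M\in C$ for all ${\bf c}\in C$, together with (when $q$ is not prime) the field automorphisms of $\mathbb{F}_q$ preserving $C$ and their compositions; it acts on cosets by $\phi({\bf v}+C)=\phi({\bf v})+C$. A linear code with covering radius $\rho$ is completely transitive if $\mathrm{Aut}(C)$ has exactly $\rho+1$ orbits on the set of cosets of $C$. A code $C$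 is completely regular if for each $l\ge0$ every vector in $C(l)=\{{\bf x}:d({\bf x},C)=l\}$ has the same number $c_l$ of neighbors (vectors at Hamming distance 1) in $C(l-1)$ and the same number $b_l$ of neighbors in $C(l+1)$. *)

theory Defs
  imports Complex_Main "HOL-Library.Function_Algebras"
begin

text \<open>Vectors of length n over a field: functions nat => 'a supported on {..<n}.
  Matrices: functions nat => nat => 'a, with explicit row/column counts.\<close>

definition vecs :: "nat \<Rightarrow> (nat \<Rightarrow> 'a::zero) set" where
  "vecs n = {v. \<forall>i. n \<le> i \<longrightarrow> v i = 0}"

definition scalev :: "'a::field \<Rightarrow> (nat \<Rightarrow> 'a) \<Rightarrow> (nat \<Rightarrow> 'a)" where
  "scalev c v = (\<lambda>i. c * v i)"

definition col :: "nat \<Rightarrow> (nat \<Rightarrow> nat \<Rightarrow> 'a::zero) \<Rightarrow> nat \<Rightarrow> (nat \<Rightarrow> 'a)" where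
  "col m M j = (\<lambda>i. if i < m then M i j else 0)"

text \<open>M (m x N) is a parity check matrix of a q-ary Hamming code with m check symbols:
  its columns are one nonzero representative of each one-dimensional subspace of F^m.\<close>
definition hamming_pcm :: "nat \<Rightarrow> nat \<Rightarrow> (nat \<Rightarrow> nat \<Rightarrow> 'a::field) \<Rightarrow> bool" where
  "hamming_pcm m N M \<longleftrightarrow>
     (\<forall>j<N. col m M j \<noteq> 0) \<and>
     (\<forall>j<N. \<forall>j'<N. j \<noteq> j' \<longrightarrow> (\<forall>c. col m M j \<noteq> scalev c (col m M j'))) \<and>
     (\<forall>v\<in>vecs m. v \<noteq> 0 \<longrightarrow> (\<exists>j<N. \<exists>c. v = scalev c (col m M j)))"

text \<open>Kronecker product of an (ma x na) matrix A with an (mb x nb) matrix B: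
  entry ((r,r'),(s,s')) = a_{r,s} b_{r',s'}, rows indexed r*mb+r', columns s*nb+s'.\<close>
definition kron :: "nat \<Rightarrow> nat \<Rightarrow> (nat \<Rightarrow> nat \<Rightarrow> 'a::times) \<Rightarrow> (nat \<Rightarrow> nat \<Rightarrow> 'a) \<Rightarrow> (nat \<Rightarrow> nat \<Rightarrow> 'a)" where
  "kron mb nb A B = (\<lambda>r s. A (r div mb) (s div nb) * B (r mod mb) (s mod nb))"

definition code_of_pcm :: "nat \<Rightarrow> nat \<Rightarrow> (nat \<Rightarrow> nat \<Rightarrow> 'a::field) \<Rightarrow> (nat \<Rightarrow> 'a) set" where
  "code_of_pcm m n H = {v \<in> vecs n. \<forall>r<m. (\<Sum>s<n. H r s * v s) = 0}"

definition wt :: "(nat \<Rightarrow> 'a::zero) \<Rightarrow> nat" where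
  "wt v = card {i. v i \<noteq> 0}"

definition hdist :: "(nat \<Rightarrow> 'a::ab_group_add) \<Rightarrow> (nat \<Rightarrow> 'a) \<Rightarrow> nat" where
  "hdist x y = wt (x - y)"

definition code_dim :: "(nat \<Rightarrow> 'a::field) set \<Rightarrow> nat" where
  "code_dim C = vector_space.dim scalev C"

definition min_dist :: "(nat \<Rightarrow> 'a::field) set \<Rightarrow> nat" where
  "min_dist C = Min {hdist x y | x y. x \<in> C \<and> y \<in> C \<and> x \<noteq> y}"

definition dist_to_code :: "(nat \<Rightarrow> 'a::field) set \<Rightarrow> (nat \<Rightarrow> 'a) \<Rightarrow> nat" where
  "dist_to_code C x = Min (hdist x ` C)"

definition covering_radius :: "nat \<Rightarrow> (nat \<Rightarrow> 'a::field) set \<Rightarrow> nat" where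
  "covering_radius n C = Max (dist_to_code C ` vecs n)"

definition monomial_mat :: "nat \<Rightarrow> (nat \<Rightarrow> nat \<Rightarrow> 'a::zero) \<Rightarrow> bool" where
  "monomial_mat n M \<longleftrightarrow>
     (\<forall>i<n. \<exists>!j. j < n \<and> M i j \<noteq> 0) \<and> (\<forall>j<n. \<exists>!i. i < n \<and> M i j \<noteq> 0)"

definition vecmat :: "nat \<Rightarrow> (nat \<Rightarrow> nat \<Rightarrow> 'a::comm_ring) \<Rightarrow> (nat \<Rightarrow> 'a) \<Rightarrow> (nat \<Rightarrow> 'a)" where
  "vecmat n M v = (\<lambda>j. if j < n then (\<Sum>i<n. v i * M i j) else 0)"

definition field_aut :: "('a::field \<Rightarrow> 'a) \<Rightarrow> bool" where
  "field_aut \<sigma> \<longleftrightarrow> bij \<sigma> \<and> (\<forall>x y. \<sigma> (x + y) = \<sigma> x + \<sigma> y) \<and> (\<forall>x y. \<sigma> (x * y) = \<sigma> x * \<sigma> y)"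

inductive_set aut_group :: "nat \<Rightarrow> (nat \<Rightarrow> 'a::field) set \<Rightarrow> ((nat \<Rightarrow> 'a) \<Rightarrow> (nat \<Rightarrow> 'a)) set"
  for n :: nat and C :: "(nat \<Rightarrow> 'a) set" where
  mono: "monomial_mat n M \<Longrightarrow> (\<forall>c\<in>C. vecmat n M c \<in> C) \<Longrightarrow> vecmat n M \<in> aut_group n C"
| fieldaut: "field_aut \<sigma> \<Longrightarrow> (\<forall>c\<in>C. (\<lambda>i. \<sigma> (c i)) \<in> C) \<Longrightarrow> (\<lambda>v i. \<sigma> (v i)) \<in> aut_group n C"
| comp: "\<phi> \<in> aut_group n C \<Longrightarrow> \<psi> \<in> aut_group n C \<Longrightarrow> \<phi> \<circ> \<psi> \<in> aut_group n C"

definition coset :: "(nat \<Rightarrow> 'a::ab_group_add) set \<Rightarrow> (nat \<Rightarrow> 'a) \<Rightarrow> (nat \<Rightarrow> 'a) set" where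
  "coset C v = (\<lambda>c. v + c) ` C"

text \<open>Orbits of Aut(C) acting on the cosets of C by phi(v + C) = phi(v) + C.\<close>
definition coset_orbits :: "nat \<Rightarrow> (nat \<Rightarrow> 'a::field) set \<Rightarrow> (nat \<Rightarrow> 'a) set set set" where
  "coset_orbits n C = (\<lambda>v. {coset C (\<phi> v) | \<phi>. \<phi> \<in> aut_group n C}) ` vecs n"

definition completely_transitive :: "nat \<Rightarrow> (nat \<Rightarrow> 'a::field) set \<Rightarrow> bool" where
  "completely_transitive n C \<longleftrightarrow> card (coset_orbits n C) = covering_radius n C + 1"

text \<open>C(l) = vectors at distance l from C. c_l counts neighbours in C(l-1)
  (none when l = 0), b_l neighbours in C(l+1).\<close>
definition completely_regular :: "nat \<Rightarrow> (nat \<Rightarrow> 'a::field) set \<Rightarrow> bool" where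
  "completely_regular n C \<longleftrightarrow>
     (\<forall>l. \<exists>cl bl. \<forall>x\<in>vecs n. dist_to_code C x = l \<longrightarrow>
        card {y\<in>vecs n. hdist x y = 1 \<and> dist_to_code C y + 1 = l} = cl \<and>
        card {y\<in>vecs n. hdist x y = 1 \<and> dist_to_code C y = l + 1} = bl)"

end

theory Submission
  imports Defs "HOL-Library.FuncSet"
begin

(* For v of length na * nb let S(v) = sum_i v_i a_(i div nb) b_(i mod nb)^T be its syndrome,
   an ma x mb matrix, where a_s, b_s are the columns of A and B; v is a codeword iff S(v) = 0.
   Every outer product x y^T is the syndrome of a vector of weight <= 1 (x, y are multiples of
   Hamming columns), so the distance of v to the code is the least number of outer products
   summing to S(v).  This gives: every matrix is a syndrome (full rank, hence the dimension),
   distances are at most min ma mb and all values up to it occur (identity blocks need that many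
   terms), and a codeword of weight <= 2 is impossible since two distinct Hamming columns are
   independent.  For complete transitivity, a minimal representative of a coset has independent
   left and right factors; two such representatives of equal weight are related by linear
   automorphisms g, h of the column spaces, which permute the Hamming columns up to scalars and
   therefore induce a monomial automorphism of the code.  Complete regularity follows, as for
   every completely transitive code. *)

section \<open>Coordinate vectors\<close>

interpretation sv: vector_space "scalev :: 'a::field \<Rightarrow> (nat \<Rightarrow> 'a) \<Rightarrow> _"
  by unfold_locales (auto simp: scalev_def fun_eq_iff algebra_simps)

interpretation svp: vector_space_pair "scalev :: 'a::field \<Rightarrow> (nat \<Rightarrow> 'a) \<Rightarrow> _"
    "scalev :: 'a::field \<Rightarrow> (nat \<Rightarrow> 'a) \<Rightarrow> _" ..

lemma sum_fun_apply: "(sum f A) x = (\<Sum>a\<in>A. f a x)"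
  by (induct A rule: infinite_finite_induct) auto

lemma scalev_apply: "scalev c v i = c * v i"
  by (simp add: scalev_def)

definition unitv :: "nat \<Rightarrow> nat \<Rightarrow> 'a::zero_neq_one" where
  "unitv k = (\<lambda>i. if i = k then 1 else 0)"

definition supp :: "(nat \<Rightarrow> 'a::zero) \<Rightarrow> nat set" where
  "supp v = {i. v i \<noteq> 0}"

lemma wt_supp: "wt v = card (supp v)"
  by (simp add: wt_def supp_def)

lemma vecs_zero [simp]: "0 \<in> vecs n"
  by (simp add: vecs_def)

lemma vecs_add [intro]: "v \<in> vecs n \<Longrightarrow> w \<in> vecs n \<Longrightarrow> (v::nat \<Rightarrow> 'a::monoid_add) + w \<in> vecs n"
  by (simp add: vecs_def)

lemma vecs_diff [intro]: "v \<in> vecs n \<Longrightarrow> w \<in> vecs n \<Longrightarrow> (v::nat \<Rightarrow> 'a::ab_group_add) - w \<in> vecs n"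
  by (simp add: vecs_def)

lemma vecs_scale [intro]: "v \<in> vecs n \<Longrightarrow> scalev c v \<in> vecs n"
  by (simp add: vecs_def scalev_apply)

lemma vecs_unitv [intro]: "k < n \<Longrightarrow> unitv k \<in> vecs n"
  by (simp add: vecs_def unitv_def)

lemma vecs_subspace: "sv.subspace (vecs n)"
  unfolding sv.subspace_def by auto

lemma supp_vecs: "v \<in> vecs n \<Longrightarrow> supp v \<subseteq> {..<n}"
  by (auto simp: vecs_def supp_def not_less[symmetric])

lemma finite_supp: "v \<in> vecs n \<Longrightarrow> finite (supp v)"
  using supp_vecs finite_subset by blast

lemma sum_supp:
  fixes v :: "nat \<Rightarrow> 'a::semiring_0"
  assumes "v \<in> vecs n"
  shows "(\<Sum>i<n. v i * f i) = (\<Sum>i\<in>supp v. v i * f i)"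
  using supp_vecs[OF assms] by (intro sum.mono_neutral_right) (auto simp: supp_def)

text \<open>\<open>vecs n\<close> is in bijection with \<open>{..<n} \<rightarrow>\<^sub>E UNIV\<close>, so it has \<open>q ^ n\<close> elements.\<close>
lemma vecs_eq_image:
  "vecs n = (\<lambda>f i. if i < n then f i else 0) ` ({..<n} \<rightarrow>\<^sub>E (UNIV :: 'a::zero set))"
proof
  show "vecs n \<subseteq> (\<lambda>f i. if i < n then f i else 0) ` ({..<n} \<rightarrow>\<^sub>E (UNIV :: 'a set))"
  proof
    fix v assume "v \<in> vecs n"
    then have e: "(\<lambda>i. if i < n then restrict v {..<n} i else 0) = v"
      by (auto simp: vecs_def fun_eq_iff)
    have "restrict v {..<n} \<in> {..<n} \<rightarrow>\<^sub>E UNIV"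
      by simp
    then have "(\<lambda>f i. if i < n then f i else 0) (restrict v {..<n})
        \<in> (\<lambda>f i. if i < n then f i else 0) ` ({..<n} \<rightarrow>\<^sub>E UNIV)"
      by (rule imageI)
    then show "v \<in> (\<lambda>f i. if i < n then f i else 0) ` ({..<n} \<rightarrow>\<^sub>E UNIV)"
      unfolding e .
  qed
qed (simp add: vecs_def image_subset_iff)

lemma card_vecs: "card (vecs n :: (nat \<Rightarrow> 'a::{zero,finite}) set) = card (UNIV :: 'a set) ^ n"
proof -
  have "inj_on (\<lambda>f i. if i < n then f i else 0) ({..<n} \<rightarrow>\<^sub>E (UNIV :: 'a set))"
  proof (rule inj_onI)
    fix f g assume fg: "f \<in> {..<n} \<rightarrow>\<^sub>E UNIV" "g \<in> {..<n} \<rightarrow>\<^sub>E UNIV"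
      and eq: "(\<lambda>i. if i < n then f i else 0) = (\<lambda>i. if i < n then g i else 0)"
    show "f = g"
      using fun_cong[OF eq] by (intro PiE_ext[OF fg]) (metis lessThan_iff)
  qed
  then show ?thesis
    unfolding vecs_eq_image by (simp add: card_image card_PiE)
qed

lemma finite_vecs [simp, intro]: "finite (vecs n :: (nat \<Rightarrow> 'a::{zero,finite}) set)"
  unfolding vecs_eq_image by (intro finite_imageI finite_PiE) auto

lemma wt_eq_0: "v \<in> vecs n \<Longrightarrow> wt v = 0 \<longleftrightarrow> v = 0"
  using finite_supp[of v n] by (auto simp: wt_supp supp_def fun_eq_iff)

lemma wt_add_le:
  assumes "v \<in> vecs n" "w \<in> vecs n"
  shows "wt ((v::nat \<Rightarrow> 'a::monoid_add) + w) \<le> wt v + wt w"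
proof -
  have "wt (v + w) \<le> card (supp v \<union> supp w)"
    unfolding wt_supp using finite_supp[OF assms(1)] finite_supp[OF assms(2)]
    by (intro card_mono) (auto simp: supp_def)
  also have "\<dots> \<le> wt v + wt w"
    unfolding wt_supp by (rule card_Un_le)
  finally show ?thesis .
qed

lemma wt_scale_unitv: "wt (scalev c (unitv k) :: nat \<Rightarrow> 'a::field) \<le> 1"
proof -
  have "supp (scalev c (unitv k) :: nat \<Rightarrow> 'a) \<subseteq> {k}"
    by (auto simp: supp_def unitv_def scalev_apply)
  then show ?thesis
    unfolding wt_supp by (metis card.empty card.insert card_mono empty_iff finite.emptyI
        finite.insertI One_nat_def)
qed

lemma unitv_inj: "inj (unitv :: nat \<Rightarrow> nat \<Rightarrow> 'a::zero_neq_one)"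
  by (rule injI) (metis unitv_def zero_neq_one)

lemma unitv_independent: "sv.independent (unitv ` {..<r} :: (nat \<Rightarrow> 'a::field) set)"
proof (rule sv.independent_if_scalars_zero)
  fix f :: "(nat \<Rightarrow> 'a) \<Rightarrow> 'a" and x :: "nat \<Rightarrow> 'a"
  assume s: "(\<Sum>x\<in>unitv ` {..<r}. scalev (f x) x) = 0" and x: "x \<in> unitv ` {..<r}"
  then obtain k where k: "k < r" "x = unitv k" by auto
  have "(\<Sum>j<r. scalev (f (unitv j)) (unitv j)) k = (0::'a)"
    using s by (simp add: sum.reindex[OF inj_on_subset[OF unitv_inj]])
  then show "f x = 0"
    using k by (simp add: sum_fun_apply scalev_apply unitv_def if_distrib sum.delta cong: if_cong)
qed simp

lemma delta_sum: "(\<Sum>k<(m::nat). (if t = k then 1 else 0) * (f k :: 'a::comm_ring_1)) = (if t < m then f t else 0)"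
proof -
  have "(\<Sum>k<m. (if t = k then 1 else 0) * f k) = (\<Sum>k<m. if t = k then f k else 0)"
    by (rule sum.cong) auto
  then show ?thesis by simp
qed

lemma delta_sum_right: "(\<Sum>k<(m::nat). (f k :: 'a::comm_ring_1) * (if t = k then 1 else 0)) = (if t < m then f t else 0)"
  using delta_sum[where m=m and t=t and f=f] by (simp add: mult.commute)

section \<open>Counting and extending over a finite field\<close>

lemma card_span_independent:
  fixes B :: "(nat \<Rightarrow> 'a::{field,finite}) set"
  assumes "finite B" "sv.independent B"
  shows "card (sv.span B) = card (UNIV :: 'a set) ^ card B"
  using assms
proof (induct B rule: finite_induct)
  case (insert x F)
  have indF: "sv.independent F" and xF: "x \<notin> sv.span F"
    using insert.hyps(2) insert.prems by (auto simp: sv.independent_insert)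
  let ?f = "\<lambda>(y, k). y + scalev k x"
  have span_eq: "sv.span (insert x F) = ?f ` (sv.span F \<times> UNIV)"
  proof (intro set_eqI iffI)
    fix z assume "z \<in> sv.span (insert x F)"
    then obtain k where "z - scalev k x \<in> sv.span F"
      by (auto simp: sv.span_insert)
    then show "z \<in> ?f ` (sv.span F \<times> UNIV)"
      by (intro image_eqI[of _ _ "(z - scalev k x, k)"]) auto
  next
    fix z assume "z \<in> ?f ` (sv.span F \<times> UNIV)"
    then obtain y k where "y \<in> sv.span F" "z = y + scalev k x"
      by auto
    then show "z \<in> sv.span (insert x F)"
      unfolding sv.span_insert by (auto intro!: exI[of _ k])
  qed
  have "inj_on ?f (sv.span F \<times> UNIV)"
  proof (rule inj_onI, clarify)
    fix y k y' k' assume y: "y \<in> sv.span F" "y' \<in> sv.span F"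
      and eq: "y + scalev k x = y' + scalev k' x"
    have "scalev (k - k') x = y' - y"
      using eq by (simp add: fun_eq_iff scalev_apply algebra_simps)
    then have sp: "scalev (k - k') x \<in> sv.span F"
      using sv.span_diff[OF y(2) y(1)] by simp
    have "k = k'"
    proof (rule ccontr)
      assume "k \<noteq> k'"
      then have "x = scalev (inverse (k - k')) (scalev (k - k') x)"
        by (simp add: fun_eq_iff scalev_apply)
      then show False
        using xF sv.span_scale[OF sp] by metis
    qed
    then show "y = y' \<and> k = k'" using eq by simp
  qed
  then have "card (sv.span (insert x F)) = card (sv.span F) * card (UNIV :: 'a set)"
    unfolding span_eq by (simp add: card_image card_cartesian_product)
  then show ?case
    using insert.hyps(1,2) insert.hyps(3)[OF indF] by (simp add: mult.commute)
qed simp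

lemma card_subspace:
  fixes C :: "(nat \<Rightarrow> 'a::{field,finite}) set"
  assumes "sv.subspace C" "finite C"
  shows "card C = card (UNIV :: 'a set) ^ sv.dim C"
proof -
  obtain B where B: "B \<subseteq> C" "sv.independent B" "C \<subseteq> sv.span B" "card B = sv.dim C"
    using sv.basis_exists by blast
  have "sv.span B = C"
    using sv.span_minimal[OF B(1) assms(1)] B(3) by blast
  then show ?thesis
    using card_span_independent[OF finite_subset[OF B(1) assms(2)] B(2)] B(4) by simp
qed

text \<open>Linear independence of an indexed family \<open>x p\<close>, \<open>p \<in> P\<close> (repetitions are dependence).\<close>
definition indep_fam :: "('b \<Rightarrow> nat \<Rightarrow> 'a::field) \<Rightarrow> 'b set \<Rightarrow> bool" where
  "indep_fam x P \<longleftrightarrow> (\<forall>c. (\<Sum>p\<in>P. scalev (c p) (x p)) = 0 \<longrightarrow> (\<forall>p\<in>P. c p = 0))"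

lemma indep_fam_inj:
  fixes x :: "'b \<Rightarrow> nat \<Rightarrow> 'a::field"
  assumes "finite P" "indep_fam x P"
  shows "inj_on x P"
proof (rule inj_onI, rule ccontr)
  fix p q assume pq: "p \<in> P" "q \<in> P" "x p = x q" "p \<noteq> q"
  define c where "c r = (if r = p then 1 else if r = q then -1 else 0 :: 'a)" for r
  have "(\<Sum>r\<in>P. scalev (c r) (x r)) = (\<Sum>r\<in>{p, q}. scalev (c r) (x r))"
    using pq assms(1) by (intro sum.mono_neutral_right) (auto simp: c_def fun_eq_iff scalev_apply)
  also have "\<dots> = 0"
    using pq by (simp add: c_def fun_eq_iff scalev_apply)
  finally have "c p = 0"
    using assms(2) pq(1) unfolding indep_fam_def by blast
  then show False by (simp add: c_def)
qed

lemma indep_fam_independent: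
  assumes "finite P" "indep_fam x P"
  shows "sv.independent (x ` P)"
proof (rule sv.independent_if_scalars_zero)
  fix f y assume s: "(\<Sum>y\<in>x ` P. scalev (f y) y) = 0" and y: "y \<in> x ` P"
  have "(\<Sum>p\<in>P. scalev (f (x p)) (x p)) = 0"
    using s by (simp add: sum.reindex[OF indep_fam_inj[OF assms]])
  then show "f y = 0"
    using assms(2)[unfolded indep_fam_def, rule_format, of "\<lambda>p. f (x p)"] y by auto
qed (use assms(1) in simp)

lemma indep_fam_reindex:
  assumes bij: "bij_betw \<beta> P P'" and ind: "indep_fam x P'" and d: "\<And>p. p \<in> P \<Longrightarrow> d p \<noteq> 0"
  shows "indep_fam (\<lambda>p. scalev (d p) (x (\<beta> p))) P"
  unfolding indep_fam_def
proof (intro allI impI ballI)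
  fix c p assume s: "(\<Sum>p\<in>P. scalev (c p) (scalev (d p) (x (\<beta> p)))) = 0" and p: "p \<in> P"
  define \<gamma> where "\<gamma> = inv_into P \<beta>"
  have \<gamma>: "\<And>q. q \<in> P \<Longrightarrow> \<gamma> (\<beta> q) = q"
    unfolding \<gamma>_def using bij by (simp add: bij_betw_def)
  have "(\<Sum>p'\<in>P'. scalev (c (\<gamma> p') * d (\<gamma> p')) (x p'))
      = (\<Sum>q\<in>P. scalev (c (\<gamma> (\<beta> q)) * d (\<gamma> (\<beta> q))) (x (\<beta> q)))"
    by (rule sum.reindex_bij_betw[OF bij, symmetric])
  also have "\<dots> = 0"
    using s by (simp add: \<gamma> fun_eq_iff scalev_apply mult.assoc cong: sum.cong)
  finally have "c (\<gamma> (\<beta> p)) * d (\<gamma> (\<beta> p)) = 0"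
    using ind[unfolded indep_fam_def, rule_format, of "\<lambda>p'. c (\<gamma> p') * d (\<gamma> p')"] p bij
    by (auto simp: bij_betw_def)
  then show "c p = 0" using d[OF p] by (simp add: \<gamma>[OF p])
qed

text \<open>A linear map carrying a basis of \<open>vecs m\<close> onto another basis is an automorphism of
  \<open>vecs m\<close> (it is onto, and \<open>vecs m\<close> is finite).\<close>
lemma linear_basis_automorphism:
  fixes g :: "(nat \<Rightarrow> 'a::{field,finite}) \<Rightarrow> nat \<Rightarrow> 'a"
  assumes g: "Vector_Spaces.linear scalev scalev g" and gB: "g ` Bs = Bs'"
    and B: "Bs \<subseteq> vecs m" "vecs m \<subseteq> sv.span Bs" and B': "Bs' \<subseteq> vecs m" "vecs m \<subseteq> sv.span Bs'"
  shows "g ` vecs m = vecs m" and "inj_on g (vecs m)"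
proof -
  have "sv.span Bs = vecs m" "sv.span Bs' = vecs m"
    using sv.span_minimal[OF B(1) vecs_subspace] sv.span_minimal[OF B'(1) vecs_subspace] B(2) B'(2)
    by blast+
  then show im: "g ` vecs m = vecs m"
    using svp.linear_span_image[OF g, of Bs] gB by simp
  then show "inj_on g (vecs m)"
    by (intro eq_card_imp_inj_on) simp_all
qed

text \<open>Two independent families in \<open>vecs m\<close> indexed by the same finite set are related by a
  linear automorphism of \<open>vecs m\<close> (extend both to bases and match the bases).\<close>
lemma indep_fam_extend_automorphism:
  fixes x x' :: "'b \<Rightarrow> nat \<Rightarrow> 'a::{field,finite}"
  assumes fP: "finite P" and ix: "indep_fam x P" and ix': "indep_fam x' P"
    and vx: "\<And>p. p \<in> P \<Longrightarrow> x p \<in> vecs m" and vx': "\<And>p. p \<in> P \<Longrightarrow> x' p \<in> vecs m"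
  shows "\<exists>g. Vector_Spaces.linear scalev scalev g \<and> g ` vecs m = vecs m \<and> inj_on g (vecs m)
     \<and> (\<forall>p\<in>P. g (x p) = x' p)"
proof -
  define X X' where "X = x ` P" and "X' = x' ` P"
  have iX: "sv.independent X" "sv.independent X'"
    unfolding X_def X'_def using indep_fam_independent fP ix ix' by blast+
  have sX: "X \<subseteq> vecs m" "X' \<subseteq> vecs m"
    using vx vx' by (auto simp: X_def X'_def)
  obtain Bs where B: "X \<subseteq> Bs" "Bs \<subseteq> vecs m" "sv.independent Bs" "vecs m \<subseteq> sv.span Bs"
    using sv.maximal_independent_subset_extend[OF sX(1) iX(1)] by blast
  obtain Bs' where B': "X' \<subseteq> Bs'" "Bs' \<subseteq> vecs m" "sv.independent Bs'" "vecs m \<subseteq> sv.span Bs'"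
    using sv.maximal_independent_subset_extend[OF sX(2) iX(2)] by blast
  have fin: "finite Bs" "finite Bs'"
    using B(2) B'(2) finite_subset finite_vecs by blast+
  have "card Bs = card Bs'"
    using sv.basis_card_eq_dim[OF B(2) B(4) B(3)] sv.basis_card_eq_dim[OF B'(2) B'(4) B'(3)] by simp
  moreover have "card X = card X'"
    unfolding X_def X'_def by (simp add: card_image indep_fam_inj[OF fP ix] indep_fam_inj[OF fP ix'])
  ultimately have "card (Bs - X) = card (Bs' - X')"
    using B(1) B'(1) fin by (simp add: card_Diff_subset finite_subset)
  then obtain h0 where h0: "bij_betw h0 (Bs - X) (Bs' - X')"
    using finite_same_card_bij fin by blast
  define f where "f b = (if b \<in> X then x' (inv_into P x b) else h0 b)" for b
  obtain g where g: "Vector_Spaces.linear scalev scalev g" "\<forall>b\<in>Bs. g b = f b"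
    using svp.linear_independent_extend[OF B(3)] by blast
  have fx: "\<And>p. p \<in> P \<Longrightarrow> f (x p) = x' p"
    using indep_fam_inj[OF fP ix] by (simp add: f_def X_def)
  have fX: "f ` X = X'"
    unfolding X_def X'_def image_image by (rule image_cong[OF refl fx])
  have fB: "f ` (Bs - X) = Bs' - X'"
  proof -
    have "f ` (Bs - X) = h0 ` (Bs - X)"
      by (rule image_cong) (auto simp: f_def)
    then show ?thesis
      using h0 by (simp add: bij_betw_def)
  qed
  have "g ` Bs = f ` Bs"
    using g(2) by (intro image_cong) auto
  also have "\<dots> = f ` X \<union> f ` (Bs - X)"
    using B(1) by (simp add: image_Un[symmetric] Un_absorb1)
  also have "\<dots> = Bs'"
    using fX fB B'(1) by auto
  finally have "g ` Bs = Bs'" .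
  note g_aut = linear_basis_automorphism[OF g(1) this B(2,4) B'(2,4)]
  have gx: "\<forall>p\<in>P. g (x p) = x' p"
    using g(2) B(1) fx by (auto simp: X_def)
  show ?thesis
    by (rule exI[of _ g]) (intro conjI g(1) g_aut gx)
qed

section \<open>Index arithmetic for pairs\<close>

text \<open>Index \<open>i < k * l\<close> encodes the pair \<open>(i div l, i mod l)\<close>.\<close>
lemma pair_index_split: "(i::nat) < k * l \<Longrightarrow> i div l < k \<and> i mod l < l"
  by (cases "l = 0") (auto simp: less_mult_imp_div_less)

lemma pair_index_join:
  fixes s s' k l :: nat
  assumes "s < k" "s' < l"
  shows "s * l + s' < k * l \<and> (s * l + s') div l = s \<and> (s * l + s') mod l = s'"
proof -
  have "s * l + s' < Suc s * l" using assms(2) by simp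
  also have "\<dots> \<le> k * l" using assms(1) by (intro mult_le_mono1) simp
  finally show ?thesis using assms(2) by simp
qed

lemma div_or_mod_inj:
  fixes P :: "nat set"
  assumes "finite P" "card P \<le> 2"
  shows "inj_on (\<lambda>p. p div l) P \<or> inj_on (\<lambda>p. p mod l) P"
proof (rule ccontr)
  assume "\<not> ?thesis"
  then obtain p p' q q' where p: "p \<in> P" "p' \<in> P" "p \<noteq> p'" "p div l = p' div l"
    and q: "q \<in> P" "q' \<in> P" "q \<noteq> q'" "q mod l = q' mod l"
    by (auto simp: inj_on_def)
  have "card {p, p'} \<le> card P"
    using p assms(1) by (intro card_mono) auto
  then have "P = {p, p'}"
    using p assms by (intro card_subset_eq[symmetric]) auto
  then have "p mod l = p' mod l"
    using q by auto
  then show False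
    using p by (metis div_mult_mod_eq)
qed

section \<open>Columns of a Hamming parity check matrix\<close>

lemma col_vecs [intro]: "col m M j \<in> vecs m"
  by (simp add: col_def vecs_def)

locale hamming =
  fixes m n :: nat and M :: "nat \<Rightarrow> nat \<Rightarrow> 'a::field"
  assumes pcm: "hamming_pcm m n M"
begin

lemma col_nonzero: "j < n \<Longrightarrow> col m M j \<noteq> 0"
  using pcm by (simp add: hamming_pcm_def)

lemma col_not_multiple: "j < n \<Longrightarrow> j' < n \<Longrightarrow> j \<noteq> j' \<Longrightarrow> col m M j \<noteq> scalev c (col m M j')"
  using pcm unfolding hamming_pcm_def by blast

lemma col_cover: "v \<in> vecs m \<Longrightarrow> v \<noteq> 0 \<Longrightarrow> \<exists>j<n. \<exists>c. v = scalev c (col m M j)"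
  using pcm unfolding hamming_pcm_def by blast

lemma col_pair_independent:
  assumes "s < n" "u < n" "s \<noteq> u" "\<And>t. \<alpha> * col m M s t + \<beta> * col m M u t = 0"
  shows "\<alpha> = 0 \<and> \<beta> = 0"
proof (cases "\<beta> = 0")
  case True
  obtain t where "col m M s t \<noteq> 0"
    using col_nonzero[OF assms(1)] by (auto simp: fun_eq_iff)
  then show ?thesis using assms(4)[of t] True by simp
next
  case False
  have "col m M u = scalev (- \<alpha> / \<beta>) (col m M s)"
    using assms(4) False by (simp add: fun_eq_iff scalev_apply field_simps add_eq_0_iff)
  then show ?thesis using col_not_multiple[OF assms(2,1)] assms(3) by metis
qed

lemma cols_independent_le2:
  assumes "finite P" "card P \<le> 2" "inj_on f P" "\<And>p. p \<in> P \<Longrightarrow> f p < n"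
  shows "indep_fam (\<lambda>p. col m M (f p)) P"
  unfolding indep_fam_def
proof (intro allI impI ballI)
  fix c p assume sum0: "(\<Sum>p\<in>P. scalev (c p) (col m M (f p))) = 0" and p: "p \<in> P"
  have "card P = 1 \<or> card P = 2"
    using assms(2) p card_gt_0_iff[of P] assms(1) by auto
  then show "c p = 0"
  proof
    assume "card P = 1"
    then have P: "P = {p}" using p by (auto simp: card_1_singleton_iff)
    obtain t where "col m M (f p) t \<noteq> 0"
      using col_nonzero[OF assms(4)[OF p]] by (auto simp: fun_eq_iff)
    then show "c p = 0"
      using fun_cong[OF sum0, of t] by (simp add: P scalev_apply)
  next
    assume "card P = 2"
    then obtain u v where P: "P = {u, v}" "u \<noteq> v" by (auto simp: card_2_iff)
    have "f u \<noteq> f v" using assms(3) P by auto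
    moreover have "\<And>t. c u * col m M (f u) t + c v * col m M (f v) t = 0"
      using sum0 P by (simp add: fun_eq_iff scalev_apply)
    ultimately have "c u = 0 \<and> c v = 0"
      using assms(4) P by (intro col_pair_independent[of "f u" "f v"]) auto
    then show "c p = 0" using p P by auto
  qed
qed

lemma col_sum_third:
  assumes "2 \<le> n"
  shows "\<exists>j c. j < n \<and> j \<noteq> 0 \<and> j \<noteq> 1 \<and> c \<noteq> 0 \<and> col m M 0 + col m M 1 = scalev c (col m M j)"
proof -
  have n01: "0 < n" "1 < n" using assms by auto
  have "col m M 0 + col m M 1 \<noteq> 0"
  proof
    assume "col m M 0 + col m M 1 = 0"
    then have "\<And>t. 1 * col m M 0 t + 1 * col m M 1 t = 0"
      by (metis mult_1 plus_fun_apply zero_fun_apply)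
    then show False using col_pair_independent[OF n01 zero_neq_one, of 1 1] by simp
  qed
  then obtain j c where j: "j < n" "col m M 0 + col m M 1 = scalev c (col m M j)"
    using col_cover by blast
  then have sum_t: "\<And>t. col m M 0 t + col m M 1 t = c * col m M j t"
    by (metis plus_fun_apply scalev_apply)
  have "c \<noteq> 0" using j(2) \<open>col m M 0 + col m M 1 \<noteq> 0\<close> by (auto simp: fun_eq_iff scalev_apply)
  moreover have "j \<noteq> 0"
  proof
    assume "j = 0"
    then have "\<And>t. (1 - c) * col m M 0 t + 1 * col m M 1 t = 0"
      using sum_t by (simp add: algebra_simps)
    then show False using col_pair_independent[OF n01 zero_neq_one, of "1 - c" 1] by simp
  qed
  moreover have "j \<noteq> 1"
  proof
    assume "j = 1"
    then have "\<And>t. 1 * col m M 0 t + (1 - c) * col m M 1 t = 0"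
      using sum_t by (simp add: algebra_simps)
    then show False using col_pair_independent[OF n01 zero_neq_one, of 1 "1 - c"] by simp
  qed
  ultimately show ?thesis using j by blast
qed

text \<open>A linear automorphism of \<open>F\<^sup>m\<close> maps the set of one-dimensional subspaces to itself,
  hence permutes the columns up to nonzero scalars.\<close>
lemma automorphism_permutes_cols:
  assumes g: "Vector_Spaces.linear scalev scalev g" and im: "g ` vecs m = vecs m"
    and inj: "inj_on g (vecs m)"
  shows "\<exists>\<pi> \<alpha>. (\<forall>s<n. \<pi> s < n \<and> \<alpha> s \<noteq> 0 \<and> g (col m M s) = scalev (\<alpha> s) (col m M (\<pi> s)))
    \<and> inj_on \<pi> {..<n}"
proof -
  have "\<exists>j c. j < n \<and> c \<noteq> 0 \<and> g (col m M s) = scalev c (col m M j)" if s: "s < n" for s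
  proof -
    have "g (col m M s) \<noteq> 0"
      using inj_onD[OF inj _ col_vecs vecs_zero] col_nonzero[OF s] svp.linear_0[OF g] by metis
    moreover have "g (col m M s) \<in> vecs m" using im by blast
    ultimately obtain j c where "j < n" "g (col m M s) = scalev c (col m M j)"
      using col_cover by blast
    moreover have "c \<noteq> 0" using calculation \<open>g (col m M s) \<noteq> 0\<close>
      by (auto simp: fun_eq_iff scalev_apply)
    ultimately show ?thesis by blast
  qed
  then obtain \<pi> \<alpha> where P: "\<forall>s<n. \<pi> s < n \<and> \<alpha> s \<noteq> 0 \<and> g (col m M s) = scalev (\<alpha> s) (col m M (\<pi> s))"
    by metis
  have "inj_on \<pi> {..<n}"
  proof (rule inj_onI, rule ccontr)
    fix s s' assume s: "s \<in> {..<n}" "s' \<in> {..<n}" and eq: "\<pi> s = \<pi> s'" and ne: "s \<noteq> s'"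
    have "g (scalev (\<alpha> s / \<alpha> s') (col m M s')) = scalev (\<alpha> s / \<alpha> s') (g (col m M s'))"
      by (rule svp.linear_scale[OF g])
    also have "\<dots> = g (col m M s)"
      using P s eq by (simp add: fun_eq_iff scalev_apply)
    finally have "scalev (\<alpha> s / \<alpha> s') (col m M s') = col m M s"
      by (rule inj_onD[OF inj _ vecs_scale[OF col_vecs] col_vecs])
    then show False using col_not_multiple s ne by (metis lessThan_iff)
  qed
  then show ?thesis using P by blast
qed

end

section \<open>Sums of outer products\<close>

definition outer :: "(nat \<Rightarrow> 'a::times) \<Rightarrow> (nat \<Rightarrow> 'a) \<Rightarrow> nat \<Rightarrow> nat \<Rightarrow> 'a" where
  "outer x y = (\<lambda>t t'. x t * y t')"

definition transpose_mat :: "(nat \<Rightarrow> nat \<Rightarrow> 'a) \<Rightarrow> nat \<Rightarrow> nat \<Rightarrow> 'a" where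
  "transpose_mat T = (\<lambda>t t'. T t' t)"

lemma transpose_outer_sum:
  "transpose_mat (\<Sum>p\<in>P. outer (x p) (y p)) = (\<Sum>p\<in>P. outer (y p) (x p :: nat \<Rightarrow> 'a::comm_ring))"
  by (simp add: transpose_mat_def outer_def fun_eq_iff sum_fun_apply mult.commute)

lemma transpose_mat_inj: "transpose_mat S = transpose_mat T \<longleftrightarrow> S = T"
  by (auto simp: transpose_mat_def fun_eq_iff)

text \<open>For linear maps \<open>g, h\<close> on columns and rows, the matrix \<open>G S H\<^sup>T\<close>: apply \<open>g\<close> to every
  column of \<open>S\<close>, then \<open>h\<close> to every row of the result.\<close>
definition mat_sandwich :: "((nat \<Rightarrow> 'a) \<Rightarrow> nat \<Rightarrow> 'a) \<Rightarrow> ((nat \<Rightarrow> 'a) \<Rightarrow> nat \<Rightarrow> 'a)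
    \<Rightarrow> (nat \<Rightarrow> nat \<Rightarrow> 'a) \<Rightarrow> nat \<Rightarrow> nat \<Rightarrow> 'a" where
  "mat_sandwich g h S = (\<lambda>t t'. h (\<lambda>l. g (\<lambda>k. S k l) t) t')"

lemma mat_sandwich_zero:
  assumes "Vector_Spaces.linear scalev scalev g" "Vector_Spaces.linear scalev scalev h"
  shows "mat_sandwich g h 0 = (0 :: nat \<Rightarrow> nat \<Rightarrow> 'a::field)"
proof -
  have "g (\<lambda>k. 0) = (\<lambda>k. 0)" "h (\<lambda>k. 0) = (\<lambda>k. 0)"
    using svp.linear_0[OF assms(1)] svp.linear_0[OF assms(2)] by (simp_all add: zero_fun_def)
  then show ?thesis
    by (simp add: mat_sandwich_def zero_fun_def)
qed

lemma outer_sum_zero_indep: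
  fixes x y :: "'b \<Rightarrow> nat \<Rightarrow> 'a::field"
  assumes "indep_fam x P" "(\<Sum>p\<in>P. outer (x p) (y p)) = 0" "p \<in> P"
  shows "y p = 0"
proof
  fix t'
  have "(\<Sum>p\<in>P. scalev (y p t') (x p)) = 0"
    using fun_cong[OF fun_cong[OF assms(2)], of _ t'] by (auto simp: fun_eq_iff sum_fun_apply scalev_apply outer_def mult.commute)
  then show "y p t' = 0 t'"
    using assms(1)[unfolded indep_fam_def, rule_format, of "\<lambda>p. y p t'"] assms(3) by simp
qed

lemma outer_sum_drop_left:
  fixes x y :: "'b \<Rightarrow> nat \<Rightarrow> 'a::field"
  assumes fin: "finite P" and p0: "p0 \<in> P" "c p0 \<noteq> 0" and dep: "(\<Sum>p\<in>P. scalev (c p) (x p)) = 0"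
  defines "e p \<equiv> - (c p / c p0)"
  shows "(\<Sum>p\<in>P. outer (x p) (y p)) = (\<Sum>p\<in>P - {p0}. outer (x p) (y p + scalev (e p) (y p0)))"
proof -
  have x0: "x p0 = (\<Sum>p\<in>P - {p0}. scalev (e p) (x p))"
  proof -
    have "scalev (c p0) (x p0) + (\<Sum>p\<in>P - {p0}. scalev (c p) (x p)) = 0"
      using dep sum.remove[OF fin p0(1), of "\<lambda>p. scalev (c p) (x p)"] by simp
    then have "x p0 = scalev (- inverse (c p0)) (\<Sum>p\<in>P - {p0}. scalev (c p) (x p))"
      using p0(2) by (auto simp: fun_eq_iff scalev_apply sum_fun_apply field_simps add_eq_0_iff)
    then show ?thesis
      by (simp add: e_def fun_eq_iff scalev_apply sum_fun_apply sum_distrib_left field_simps sum_negf)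
  qed
  have "(\<Sum>p\<in>P. outer (x p) (y p)) = outer (x p0) (y p0) + (\<Sum>p\<in>P - {p0}. outer (x p) (y p))"
    using sum.remove[OF fin p0(1), of "\<lambda>p. outer (x p) (y p)"] by simp
  also have "outer (x p0) (y p0) = (\<Sum>p\<in>P - {p0}. outer (x p) (scalev (e p) (y p0)))"
    unfolding x0 by (simp add: outer_def fun_eq_iff sum_fun_apply scalev_apply sum_distrib_left mult_ac)
  finally show ?thesis
    by (simp add: outer_def fun_eq_iff sum_fun_apply sum.distrib[symmetric] distrib_left add.commute)
qed

lemma outer_sum_drop_right:
  fixes x y :: "'b \<Rightarrow> nat \<Rightarrow> 'a::field"
  assumes fin: "finite P" and p0: "p0 \<in> P" "c p0 \<noteq> 0" and dep: "(\<Sum>p\<in>P. scalev (c p) (y p)) = 0"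
  defines "e p \<equiv> - (c p / c p0)"
  shows "(\<Sum>p\<in>P. outer (x p) (y p)) = (\<Sum>p\<in>P - {p0}. outer (x p + scalev (e p) (x p0)) (y p))"
proof -
  have "transpose_mat (\<Sum>p\<in>P. outer (x p) (y p))
      = transpose_mat (\<Sum>p\<in>P - {p0}. outer (x p + scalev (e p) (x p0)) (y p))"
    unfolding transpose_outer_sum e_def by (rule outer_sum_drop_left[OF assms(1-4)])
  then show ?thesis
    by (simp only: transpose_mat_inj)
qed

section \<open>Monomial matrices\<close>

lemma monomial_mat_action:
  fixes M :: "nat \<Rightarrow> nat \<Rightarrow> 'a::field"
  assumes "monomial_mat n M"
  obtains p where "bij_betw p {..<n} {..<n}" "\<And>j. j < n \<Longrightarrow> M (p j) j \<noteq> 0"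
    "\<And>x j. j < n \<Longrightarrow> vecmat n M x j = x (p j) * M (p j) j"
proof -
  have col: "\<And>j. j < n \<Longrightarrow> \<exists>!i. i < n \<and> M i j \<noteq> 0"
    and row: "\<And>i. i < n \<Longrightarrow> \<exists>!j. j < n \<and> M i j \<noteq> 0"
    using assms unfolding monomial_mat_def by auto
  define p where "p j = (THE i. i < n \<and> M i j \<noteq> 0)" for j
  have pj: "p j < n \<and> M (p j) j \<noteq> 0" if "j < n" for j
    unfolding p_def by (rule theI'[OF col[OF that]])
  have p_unique: "i = p j" if "j < n" "i < n" "M i j \<noteq> 0" for i j
    unfolding p_def by (rule the1_equality[OF col[OF that(1)], symmetric]) (use that in simp)
  have "inj_on p {..<n}"
  proof (rule inj_onI)
    fix j j' assume "j \<in> {..<n}" "j' \<in> {..<n}" "p j = p j'"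
    then show "j = j'" using row[of "p j"] pj[of j] pj[of j'] by auto
  qed
  then have "bij_betw p {..<n} {..<n}"
    using pj by (intro bij_betw_imageI endo_inj_surj) auto
  moreover have "vecmat n M x j = x (p j) * M (p j) j" if "j < n" for x j
  proof -
    have "(\<Sum>i<n. x i * M i j) = (\<Sum>i<n. if i = p j then x i * M i j else 0)"
      by (rule sum.cong) (use p_unique that in auto)
    then show ?thesis using pj[OF that] that by (simp add: vecmat_def)
  qed
  ultimately show ?thesis using that pj by blast
qed

lemma vecmat_vecs: "vecmat n M x \<in> vecs n"
  by (simp add: vecmat_def vecs_def)

lemma vecmat_diff: "vecmat n M (x - y) = vecmat n M x - vecmat n M y"
  by (simp add: vecmat_def fun_eq_iff sum_subtractf left_diff_distrib)

lemma vecmat_wt: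
  fixes M :: "nat \<Rightarrow> nat \<Rightarrow> 'a::field"
  assumes M: "monomial_mat n M" and x: "x \<in> vecs n"
  shows "wt (vecmat n M x) = wt x"
proof -
  obtain p where p: "bij_betw p {..<n} {..<n}" "\<And>j. j < n \<Longrightarrow> M (p j) j \<noteq> 0"
    "\<And>x j. j < n \<Longrightarrow> vecmat n M x j = x (p j) * M (p j) j"
    using monomial_mat_action[OF M] by blast
  have "supp (vecmat n M x) = {j \<in> {..<n}. x (p j) \<noteq> 0}"
    using p(2,3) by (auto simp: supp_def vecmat_def)
  moreover have "p ` {j \<in> {..<n}. x (p j) \<noteq> 0} = supp x"
    using supp_vecs[OF x] p(1) by (auto simp: supp_def bij_betw_def image_iff)
  moreover have "inj_on p {j \<in> {..<n}. x (p j) \<noteq> 0}"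
    using p(1) by (auto simp: bij_betw_def intro: inj_on_subset)
  ultimately show ?thesis
    by (simp add: wt_supp card_image[symmetric])
qed

lemma monomial_mat_of_perm:
  fixes d :: "nat \<Rightarrow> 'a::field"
  assumes \<tau>: "bij_betw \<tau> {..<n} {..<n}" and d: "\<And>i. i < n \<Longrightarrow> d i \<noteq> 0"
  defines "M \<equiv> \<lambda>i j. if i < n \<and> j = \<tau> i then d i else 0"
  shows "monomial_mat n M"
    and "(\<Sum>j<n. vecmat n M x j * F j) = (\<Sum>i<n. x i * d i * F (\<tau> i))"
proof -
  have Mnz: "M i j \<noteq> 0 \<longleftrightarrow> i < n \<and> j = \<tau> i" for i j
    using d by (auto simp: M_def)
  have \<tau>n: "\<And>i. i < n \<Longrightarrow> \<tau> i < n" and \<tau>inj: "inj_on \<tau> {..<n}"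
    using \<tau> by (auto simp: bij_betw_def)
  show "monomial_mat n M"
    unfolding monomial_mat_def
  proof (intro conjI allI impI)
    fix i assume "i < n"
    then show "\<exists>!j. j < n \<and> M i j \<noteq> 0" using \<tau>n by (auto simp: Mnz)
  next
    fix j assume "j < n"
    then obtain i where i: "i < n" "j = \<tau> i" using \<tau> by (auto simp: bij_betw_def)
    show "\<exists>!i. i < n \<and> M i j \<noteq> 0"
      using i inj_onD[OF \<tau>inj] by (auto simp: Mnz)
  qed
  have "(\<Sum>j<n. vecmat n M x j * F j) = (\<Sum>j<n. \<Sum>i<n. x i * M i j * F j)"
    by (rule sum.cong) (simp_all add: vecmat_def sum_distrib_right)
  also have "\<dots> = (\<Sum>i<n. \<Sum>j<n. x i * M i j * F j)"
    by (rule sum.swap)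
  also have "\<dots> = (\<Sum>i<n. x i * d i * F (\<tau> i))"
  proof (rule sum.cong[OF refl])
    fix i assume "i \<in> {..<n}"
    then show "(\<Sum>j<n. x i * M i j * F j) = x i * d i * F (\<tau> i)"
      using \<tau>n[of i] by (simp add: M_def if_distrib[of "\<lambda>m. x i * m * F _"] sum.delta cong: if_cong)
  qed
  finally show "(\<Sum>j<n. vecmat n M x j * F j) = (\<Sum>i<n. x i * d i * F (\<tau> i))" .
qed

section \<open>Isometries of a code\<close>

definition code_isometry :: "nat \<Rightarrow> (nat \<Rightarrow> 'a::field) set \<Rightarrow> ((nat \<Rightarrow> 'a) \<Rightarrow> (nat \<Rightarrow> 'a)) \<Rightarrow> bool" where
  "code_isometry n C \<phi> \<longleftrightarrow> (\<forall>x\<in>vecs n. \<phi> x \<in> vecs n)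
     \<and> (\<forall>x\<in>vecs n. \<forall>y\<in>vecs n. \<phi> (x - y) = \<phi> x - \<phi> y)
     \<and> (\<forall>x\<in>vecs n. wt (\<phi> x) = wt x) \<and> (\<forall>c\<in>C. \<phi> c \<in> C)"

lemma aut_group_isometry:
  assumes "\<phi> \<in> aut_group n C"
  shows "code_isometry n C \<phi>"
  using assms
proof induct
  case (mono M)
  then show ?case
    by (simp add: code_isometry_def vecmat_vecs vecmat_diff vecmat_wt)
next
  case (fieldaut \<sigma>)
  have add: "\<And>x y. \<sigma> (x + y) = \<sigma> x + \<sigma> y" and "bij \<sigma>"
    using fieldaut by (auto simp: field_aut_def)
  have zero: "\<sigma> 0 = 0" using add[of 0 0] by (metis add_cancel_right_right add_0)
  have "\<sigma> (x - y) = \<sigma> x - \<sigma> y" for x y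
    using add[of "x - y" y] by (simp add: algebra_simps)
  moreover have "\<sigma> x = 0 \<longleftrightarrow> x = 0" for x
    using \<open>bij \<sigma>\<close> zero by (metis bij_pointE)
  ultimately show ?case
    using fieldaut by (auto simp: code_isometry_def vecs_def zero wt_def fun_eq_iff)
next
  case (comp \<phi> \<psi>)
  then show ?case by (auto simp: code_isometry_def)
qed

section \<open>Linear codes\<close>

locale linear_code =
  fixes n :: nat and C :: "(nat \<Rightarrow> 'a::{field,finite}) set"
  assumes subspace: "sv.subspace C" and code_vecs: "C \<subseteq> vecs n"
begin

lemma finite_code: "finite C"
  using code_vecs finite_subset by blast

lemma code_zero: "0 \<in> C"
  using subspace by (rule sv.subspace_0)

lemma code_add: "x \<in> C \<Longrightarrow> y \<in> C \<Longrightarrow> x + y \<in> C"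
  using subspace by (rule sv.subspace_add)

lemma code_diff: "x \<in> C \<Longrightarrow> y \<in> C \<Longrightarrow> x - y \<in> C"
  using subspace by (rule sv.subspace_diff)

lemma dist_le: "c \<in> C \<Longrightarrow> dist_to_code C x \<le> hdist x c"
  unfolding dist_to_code_def using finite_code by (intro Min_le) auto

lemma dist_attained: "\<exists>c\<in>C. dist_to_code C x = hdist x c"
proof -
  have "Min (hdist x ` C) \<in> hdist x ` C"
    using finite_code code_zero by (intro Min_in) auto
  then show ?thesis by (auto simp: dist_to_code_def)
qed

lemma dist_shift:
  assumes "c \<in> C"
  shows "dist_to_code C (x + c) = dist_to_code C x"
proof -
  have "hdist (x + c) ` C = hdist x ` (\<lambda>c'. c' - c) ` C"
    by (auto simp: image_image hdist_def algebra_simps)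
  also have "(\<lambda>c'. c' - c) ` C = C"
  proof
    show "(\<lambda>c'. c' - c) ` C \<subseteq> C" using code_diff assms by blast
    show "C \<subseteq> (\<lambda>c'. c' - c) ` C"
      using code_add assms by (auto intro: image_eqI[where x="_ + c"])
  qed
  finally show ?thesis
    unfolding dist_to_code_def by (rule arg_cong[where f=Min])
qed

lemma coset_eq_iff: "coset C x = coset C y \<longleftrightarrow> x - y \<in> C"
proof
  assume "coset C x = coset C y"
  moreover have "x \<in> coset C x"
    unfolding coset_def using code_zero by (rule rev_image_eqI) simp
  ultimately obtain c where "c \<in> C" "x = y + c"
    by (auto simp: coset_def)
  then show "x - y \<in> C" by (simp add: algebra_simps)
next
  assume d: "x - y \<in> C"
  have "x + c = y + ((x - y) + c)" "y + c = x + (c - (x - y))" for c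
    by simp_all
  then show "coset C x = coset C y"
    unfolding coset_def using code_add[OF d] code_diff[OF _ d] by blast
qed

text \<open>Isometries are bijections of \<open>vecs n\<close> that map the code onto itself, hence preserve
  the distance to the code.\<close>
lemma isometry_inj:
  assumes "code_isometry n C \<phi>"
  shows "inj_on \<phi> (vecs n)"
proof (rule inj_onI)
  fix x y assume xy: "x \<in> vecs n" "y \<in> vecs n" "\<phi> x = \<phi> y"
  then have "wt (x - y) = wt (\<phi> x - \<phi> y)"
    using assms vecs_diff[OF xy(1,2)] unfolding code_isometry_def by metis
  then show "x = y" using xy wt_eq_0[OF vecs_diff[OF xy(1,2)]] by (simp add: wt_supp supp_def)
qed

lemma isometry_dist:
  assumes iso: "code_isometry n C \<phi>" and x: "x \<in> vecs n"
  shows "dist_to_code C (\<phi> x) = dist_to_code C x"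
proof -
  have "\<phi> ` C = C"
    using iso code_vecs inj_on_subset[OF isometry_inj[OF iso] code_vecs] finite_code
    by (intro endo_inj_surj) (auto simp: code_isometry_def)
  moreover have "hdist (\<phi> x) (\<phi> c) = hdist x c" if "c \<in> C" for c
    using iso x code_vecs that vecs_diff[OF x, of c] unfolding code_isometry_def hdist_def
    by (metis subsetD)
  ultimately have "hdist (\<phi> x) ` C = hdist x ` C"
    by (metis (no_types, lifting) image_cong image_image)
  then show ?thesis by (simp add: dist_to_code_def)
qed

definition coset_transitive :: bool where
  "coset_transitive \<longleftrightarrow> (\<forall>x\<in>vecs n. \<forall>y\<in>vecs n.
     dist_to_code C x = dist_to_code C y \<longrightarrow> (\<exists>\<phi>\<in>aut_group n C. \<phi> x - y \<in> C))"

lemma card_coset_orbits: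
  assumes coset_transitive
  shows "card (coset_orbits n C) = card (dist_to_code C ` vecs n)"
proof -
  define cls where "cls r = {coset C u | u. u \<in> vecs n \<and> dist_to_code C u = r}" for r
  have orbit: "{coset C (\<phi> v) | \<phi>. \<phi> \<in> aut_group n C} = cls (dist_to_code C v)"
    if v: "v \<in> vecs n" for v
  proof (intro set_eqI iffI)
    fix z assume "z \<in> {coset C (\<phi> v) | \<phi>. \<phi> \<in> aut_group n C}"
    then obtain \<phi> where \<phi>: "\<phi> \<in> aut_group n C" "z = coset C (\<phi> v)" by blast
    have "code_isometry n C \<phi>" using aut_group_isometry[OF \<phi>(1)] .
    then show "z \<in> cls (dist_to_code C v)"
      using \<phi>(2) v isometry_dist unfolding cls_def code_isometry_def by blast
  next
    fix z assume "z \<in> cls (dist_to_code C v)"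
    then obtain u where u: "u \<in> vecs n" "dist_to_code C u = dist_to_code C v" "z = coset C u"
      by (auto simp: cls_def)
    then obtain \<phi> where "\<phi> \<in> aut_group n C" "\<phi> v - u \<in> C"
      using assms v unfolding coset_transitive_def by metis
    then show "z \<in> {coset C (\<phi> v) | \<phi>. \<phi> \<in> aut_group n C}"
      using u(3) coset_eq_iff by blast
  qed
  have "coset_orbits n C = cls ` dist_to_code C ` vecs n"
    unfolding coset_orbits_def image_image using orbit by (intro image_cong) auto
  moreover have "inj_on cls (dist_to_code C ` vecs n)"
  proof (rule inj_onI, clarify)
    fix v v' assume v: "v \<in> vecs n" "v' \<in> vecs n"
      and eq: "cls (dist_to_code C v) = cls (dist_to_code C v')"
    have "coset C v \<in> cls (dist_to_code C v')"
      using v eq by (auto simp: cls_def)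
    then obtain u where "dist_to_code C u = dist_to_code C v'" "coset C v = coset C u"
      by (auto simp: cls_def)
    then show "dist_to_code C v = dist_to_code C v'"
      using coset_eq_iff dist_shift[of "v - u" u] by auto
  qed
  ultimately show ?thesis by (simp add: card_image)
qed

text \<open>Completely transitive codes are completely regular: an automorphism composed with a
  translation by a codeword carries the neighbourhood of one vector at distance \<open>l\<close>
  bijectively onto that of another, preserving distances.\<close>
lemma neighbour_count_eq:
  assumes tr: coset_transitive and x: "x \<in> vecs n" "x' \<in> vecs n"
    and d: "dist_to_code C x = dist_to_code C x'"
  shows "card {y \<in> vecs n. hdist x y = 1 \<and> Q (dist_to_code C y)}
       = card {y \<in> vecs n. hdist x' y = 1 \<and> Q (dist_to_code C y)}"
proof -
  obtain \<phi> where \<phi>: "\<phi> \<in> aut_group n C" "\<phi> x - x' \<in> C"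
    using tr x d unfolding coset_transitive_def by metis
  define c where "c = \<phi> x - x'"
  have iso: "code_isometry n C \<phi>" using aut_group_isometry[OF \<phi>(1)] .
  define \<psi> where "\<psi> y = \<phi> y - c" for y
  have c: "c \<in> C" "- c \<in> C" "c \<in> vecs n"
    using \<phi>(2) code_diff[OF code_zero \<phi>(2)] code_vecs by (auto simp: c_def)
  have \<psi>_vecs: "\<psi> y \<in> vecs n" if "y \<in> vecs n" for y
    using iso that c(3) by (auto simp: \<psi>_def code_isometry_def)
  have \<psi>_hdist: "hdist x' (\<psi> y) = hdist x y" if "y \<in> vecs n" for y
  proof -
    have "x' - \<psi> y = \<phi> (x - y)"
      using iso x(1) that by (simp add: \<psi>_def c_def code_isometry_def)
    then show ?thesis
      using iso vecs_diff[OF x(1) that] by (simp add: hdist_def code_isometry_def)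
  qed
  have \<psi>_dist: "dist_to_code C (\<psi> y) = dist_to_code C y" if "y \<in> vecs n" for y
    using dist_shift[OF c(2), of "\<phi> y"] isometry_dist[OF iso that] by (simp add: \<psi>_def)
  have \<psi>_inj: "inj_on \<psi> (vecs n)"
    using isometry_inj[OF iso] by (auto simp: inj_on_def \<psi>_def)
  then have \<psi>_surj: "\<psi> ` vecs n = vecs n"
    using \<psi>_vecs by (intro endo_inj_surj) auto
  let ?N = "\<lambda>x. {y \<in> vecs n. hdist x y = 1 \<and> Q (dist_to_code C y)}"
  have im: "\<psi> ` ?N x = ?N x'"
  proof (intro equalityI subsetI)
    fix z assume "z \<in> \<psi> ` ?N x"
    then show "z \<in> ?N x'" using \<psi>_vecs \<psi>_hdist \<psi>_dist by auto
  next
    fix z assume z: "z \<in> ?N x'"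
    then obtain y where "y \<in> vecs n" "z = \<psi> y" using \<psi>_surj by blast
    then show "z \<in> \<psi> ` ?N x" using z \<psi>_hdist \<psi>_dist by auto
  qed
  have "inj_on \<psi> (?N x)"
    using \<psi>_inj by (rule inj_on_subset) blast
  from card_image[OF this] show ?thesis
    unfolding im by simp
qed

lemma completely_regular_if_transitive:
  assumes coset_transitive
  shows "completely_regular n C"
  unfolding completely_regular_def
proof
  fix l
  show "\<exists>cl bl. \<forall>x\<in>vecs n. dist_to_code C x = l \<longrightarrow>
     card {y \<in> vecs n. hdist x y = 1 \<and> dist_to_code C y + 1 = l} = cl \<and>
     card {y \<in> vecs n. hdist x y = 1 \<and> dist_to_code C y = l + 1} = bl"
  proof (cases "\<exists>x0\<in>vecs n. dist_to_code C x0 = l")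
    case True
    then obtain x0 where x0: "x0 \<in> vecs n" "dist_to_code C x0 = l" by blast
    show ?thesis
      using neighbour_count_eq[OF assms _ x0(1)] x0(2) by (intro exI) auto
  qed auto
qed

end

section \<open>Codes defined by a parity check matrix\<close>

definition pcm_syndrome :: "nat \<Rightarrow> nat \<Rightarrow> (nat \<Rightarrow> nat \<Rightarrow> 'a::field) \<Rightarrow> (nat \<Rightarrow> 'a) \<Rightarrow> nat \<Rightarrow> 'a" where
  "pcm_syndrome m n H v = (\<lambda>r. if r < m then \<Sum>s<n. H r s * v s else 0)"

lemma pcm_syndrome_vecs: "pcm_syndrome m n H v \<in> vecs m"
  by (simp add: pcm_syndrome_def vecs_def)

lemma pcm_syndrome_diff: "pcm_syndrome m n H (v - w) = pcm_syndrome m n H v - pcm_syndrome m n H w"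
  by (simp add: pcm_syndrome_def fun_eq_iff sum_subtractf right_diff_distrib)

lemma code_of_pcm_iff: "v \<in> code_of_pcm m n H \<longleftrightarrow> v \<in> vecs n \<and> pcm_syndrome m n H v = 0"
  by (auto simp: code_of_pcm_def pcm_syndrome_def fun_eq_iff)

lemma linear_code_of_pcm: "linear_code n (code_of_pcm m n (H :: nat \<Rightarrow> nat \<Rightarrow> 'a::{field,finite}))"
proof
  show "sv.subspace (code_of_pcm m n H)"
    unfolding sv.subspace_def
    by (auto simp: code_of_pcm_def sum.distrib distrib_left scalev_apply mult.left_commute
        simp flip: sum_distrib_left)
qed (auto simp: code_of_pcm_def)

text \<open>If every syndrome occurs (\<open>H\<close> has full rank \<open>m\<close>), the code has \<open>q ^ (n - m)\<close> elements and
  dimension \<open>n - m\<close>: the vectors of each syndrome form a translate of the code.\<close>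
lemma card_code_of_pcm:
  fixes H :: "nat \<Rightarrow> nat \<Rightarrow> 'a::{field,finite}"
  assumes onto: "\<And>y. y \<in> vecs m \<Longrightarrow> \<exists>v\<in>vecs n. pcm_syndrome m n H v = y"
  shows "card (code_of_pcm m n H) * card (UNIV :: 'a set) ^ m = card (UNIV :: 'a set) ^ n"
proof -
  let ?C = "code_of_pcm m n H"
  define fibre where "fibre y = {v \<in> vecs n. pcm_syndrome m n H v = y}" for y
  have "card (fibre y) = card ?C" if y: "y \<in> vecs m" for y
  proof -
    obtain w where w: "w \<in> vecs n" "pcm_syndrome m n H w = y" using onto[OF y] by blast
    have "fibre y = (\<lambda>c. w + c) ` ?C"
    proof (intro equalityI subsetI)
      fix v assume "v \<in> fibre y"
      then have "v - w \<in> ?C" "v = w + (v - w)"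
        using w by (auto simp: fibre_def code_of_pcm_iff pcm_syndrome_diff)
      then show "v \<in> (\<lambda>c. w + c) ` ?C" by blast
    next
      fix v assume "v \<in> (\<lambda>c. w + c) ` ?C"
      then obtain c where "c \<in> ?C" "v = w + c" by blast
      moreover have "pcm_syndrome m n H (w + c) = pcm_syndrome m n H w + pcm_syndrome m n H c"
        using pcm_syndrome_diff[of m n H "w + c" c] by simp
      ultimately show "v \<in> fibre y"
        using w by (auto simp: fibre_def code_of_pcm_iff)
    qed
    then show ?thesis by (simp add: card_image)
  qed
  moreover have "vecs n = (\<Union>y\<in>vecs m. fibre y)"
    using pcm_syndrome_vecs by (auto simp: fibre_def)
  then have "card (vecs n :: (nat \<Rightarrow> 'a) set) = (\<Sum>y\<in>vecs m. card (fibre y))"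
    by (simp only:) (rule card_UN_disjoint, auto simp: fibre_def)
  ultimately show ?thesis
    by (simp add: card_vecs)
qed

lemma code_dim_of_pcm:
  fixes H :: "nat \<Rightarrow> nat \<Rightarrow> 'a::{field,finite}"
  assumes onto: "\<And>y. y \<in> vecs m \<Longrightarrow> \<exists>v\<in>vecs n. pcm_syndrome m n H v = y"
  shows "sv.dim (code_of_pcm m n H) = n - m"
proof -
  interpret linear_code n "code_of_pcm m n H" by (rule linear_code_of_pcm)
  have "card (UNIV :: 'a set) ^ (sv.dim (code_of_pcm m n H) + m) = card (UNIV :: 'a set) ^ n"
    using card_code_of_pcm[OF onto] card_subspace[OF subspace finite_code] by (simp add: power_add)
  moreover have "1 < card (UNIV :: 'a set)"
    using card_mono[of UNIV "{0::'a, 1}"] by simp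
  ultimately show ?thesis by simp
qed

section \<open>The code with parity check matrix \<open>A \<otimes> B\<close>\<close>

text \<open>Throughout, \<open>A\<close> and \<open>B\<close> are Hamming parity check matrices with columns \<open>a s\<close>
  (\<open>s < na\<close>) and \<open>b s\<close> (\<open>s < nb\<close>); coordinate \<open>i < na * nb\<close> of the product code corresponds to the
  column pair \<open>(i div nb, i mod nb)\<close>.\<close>
locale kron_code = A: hamming ma na A + B: hamming mb nb B
  for ma na :: nat and A :: "nat \<Rightarrow> nat \<Rightarrow> 'a::{field,finite}"
    and mb nb :: nat and B :: "nat \<Rightarrow> nat \<Rightarrow> 'a"
begin

abbreviation a where "a \<equiv> col ma A"
abbreviation b where "b \<equiv> col mb B"
abbreviation KC where "KC \<equiv> code_of_pcm (ma * mb) (na * nb) (kron mb nb A B)"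

definition syndrome :: "(nat \<Rightarrow> 'a) \<Rightarrow> nat \<Rightarrow> nat \<Rightarrow> 'a" where
  "syndrome v = (\<lambda>t t'. \<Sum>i<na * nb. v i * a (i div nb) t * b (i mod nb) t')"

lemma pcm_syndrome_kron:
  "pcm_syndrome (ma * mb) (na * nb) (kron mb nb A B) v r
     = (if r < ma * mb then syndrome v (r div mb) (r mod mb) else 0)"
proof (cases "r < ma * mb")
  case True
  then have "r div mb < ma" "r mod mb < mb"
    using pair_index_split by blast+
  then show ?thesis
    using True by (simp add: pcm_syndrome_def syndrome_def kron_def col_def mult_ac)
qed (simp add: pcm_syndrome_def)

lemma syndrome_outside: "ma \<le> t \<or> mb \<le> t' \<Longrightarrow> syndrome v t t' = 0"
  by (auto simp: syndrome_def col_def)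

lemma syndrome_eq_iff:
  "syndrome v = syndrome w \<longleftrightarrow>
     pcm_syndrome (ma * mb) (na * nb) (kron mb nb A B) v = pcm_syndrome (ma * mb) (na * nb) (kron mb nb A B) w"
proof
  assume eq: "pcm_syndrome (ma * mb) (na * nb) (kron mb nb A B) v = pcm_syndrome (ma * mb) (na * nb) (kron mb nb A B) w"
  show "syndrome v = syndrome w"
  proof (intro ext)
    fix t t'
    show "syndrome v t t' = syndrome w t t'"
    proof (cases "t < ma \<and> t' < mb")
      case True
      then have "t * mb + t' < ma * mb \<and> (t * mb + t') div mb = t \<and> (t * mb + t') mod mb = t'"
        by (intro pair_index_join) auto
      then show ?thesis
        using fun_cong[OF eq, of "t * mb + t'"] by (simp add: pcm_syndrome_kron)
    qed (auto simp: syndrome_outside)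
  qed
qed (simp add: fun_eq_iff pcm_syndrome_kron)

lemma syndrome_diff: "syndrome (v - w) = syndrome v - syndrome w"
  by (simp add: syndrome_def fun_eq_iff sum_subtractf algebra_simps)

lemma syndrome_add: "syndrome (v + w) = syndrome v + syndrome w"
  by (simp add: syndrome_def fun_eq_iff sum.distrib algebra_simps)

lemma syndrome_zero [simp]: "syndrome 0 = 0"
  by (simp add: syndrome_def fun_eq_iff)

lemma KC_iff: "v \<in> KC \<longleftrightarrow> v \<in> vecs (na * nb) \<and> syndrome v = 0"
  using syndrome_eq_iff[of v 0]
  by (simp add: code_of_pcm_iff pcm_syndrome_def fun_eq_iff)

lemma KC_diff_iff:
  "v \<in> vecs (na * nb) \<Longrightarrow> w \<in> vecs (na * nb) \<Longrightarrow> v - w \<in> KC \<longleftrightarrow> syndrome v = syndrome w"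
  by (auto simp: KC_iff syndrome_diff)

sublocale linear_code "na * nb" KC
  by (rule linear_code_of_pcm)

lemma syndrome_outer_sum:
  assumes "v \<in> vecs (na * nb)"
  shows "syndrome v = (\<Sum>p\<in>supp v. outer (a (p div nb)) (scalev (v p) (b (p mod nb))))"
    and "syndrome v = (\<Sum>p\<in>supp v. outer (scalev (v p) (a (p div nb))) (b (p mod nb)))"
proof -
  have "syndrome v t t' = (\<Sum>i\<in>supp v. v i * (a (i div nb) t * b (i mod nb) t'))" for t t'
    unfolding syndrome_def mult.assoc by (rule sum_supp[OF assms])
  then show "syndrome v = (\<Sum>p\<in>supp v. outer (a (p div nb)) (scalev (v p) (b (p mod nb))))"
    and "syndrome v = (\<Sum>p\<in>supp v. outer (scalev (v p) (a (p div nb))) (b (p mod nb)))"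
    by (simp_all add: fun_eq_iff sum_fun_apply outer_def scalev_apply mult_ac)
qed

lemma syndrome_unit:
  assumes "k < na * nb"
  shows "syndrome (scalev c (unitv k)) = outer (scalev c (a (k div nb))) (b (k mod nb))"
proof -
  have "syndrome (scalev c (unitv k)) t t' = (\<Sum>i<na * nb. if i = k then c * a (k div nb) t * b (k mod nb) t' else 0)" for t t'
    unfolding syndrome_def by (rule sum.cong) (auto simp: unitv_def scalev_apply)
  then show ?thesis
    using assms by (simp add: outer_def fun_eq_iff scalev_apply)
qed

section \<open>Realizing syndromes by vectors of small weight\<close>

text \<open>Every outer product \<open>x y\<^sup>T\<close> is the syndrome of a vector of weight at most one: \<open>x\<close> and \<open>y\<close>
  are multiples of columns of \<open>A\<close> and \<open>B\<close>.\<close>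
lemma outer_realizable:
  assumes x: "x \<in> vecs ma" and y: "y \<in> vecs mb"
  shows "\<exists>w\<in>vecs (na * nb). wt w \<le> 1 \<and> syndrome w = outer x y"
proof (cases "x = 0 \<or> y = 0")
  case True
  then have "outer x y = 0" by (auto simp: outer_def fun_eq_iff)
  then show ?thesis by (intro bexI[of _ 0]) (auto simp: wt_supp supp_def syndrome_def fun_eq_iff)
next
  case False
  obtain s c where s: "s < na" "x = scalev c (a s)" using A.col_cover x False by blast
  obtain s' d where s': "s' < nb" "y = scalev d (b s')" using B.col_cover y False by blast
  define k where "k = s * nb + s'"
  have k: "k < na * nb" "k div nb = s" "k mod nb = s'"
    using pair_index_join[OF s(1) s'(1)] by (simp_all add: k_def)
  have "syndrome (scalev (c * d) (unitv k)) = outer x y"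
    unfolding syndrome_unit[OF k(1)] k(2,3) s(2) s'(2)
    by (simp add: outer_def fun_eq_iff scalev_apply mult_ac)
  then show ?thesis
    using k(1) wt_scale_unitv by (intro bexI[of _ "scalev (c * d) (unitv k)"]) auto
qed

lemma outer_sum_realizable:
  assumes "finite Q" "\<And>p. p \<in> Q \<Longrightarrow> x p \<in> vecs ma \<and> y p \<in> vecs mb"
  shows "\<exists>w\<in>vecs (na * nb). wt w \<le> card Q \<and> syndrome w = (\<Sum>p\<in>Q. outer (x p) (y p))"
  using assms
proof (induct Q rule: finite_induct)
  case empty
  then show ?case by (intro bexI[of _ 0]) (auto simp: wt_supp supp_def syndrome_def fun_eq_iff)
next
  case (insert q Q)
  obtain w where w: "w \<in> vecs (na * nb)" "wt w \<le> card Q" "syndrome w = (\<Sum>p\<in>Q. outer (x p) (y p))"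
    using insert by auto
  obtain w1 where w1: "w1 \<in> vecs (na * nb)" "wt w1 \<le> 1" "syndrome w1 = outer (x q) (y q)"
    using outer_realizable insert.prems by blast
  have "wt (w1 + w) \<le> card (insert q Q)"
    using wt_add_le[OF w1(1) w(1)] w1(2) w(2) insert.hyps by simp
  moreover have "syndrome (w1 + w) = (\<Sum>p\<in>insert q Q. outer (x p) (y p))"
    using insert.hyps by (simp add: syndrome_add w1 w)
  ultimately show ?case
    using w1(1) w(1) by blast
qed

section \<open>Distance to the code\<close>

lemma dist_le_wt:
  assumes "v \<in> vecs (na * nb)" "w \<in> vecs (na * nb)" "syndrome w = syndrome v"
  shows "dist_to_code KC v \<le> wt w"
  using dist_le[of "v - w" v] KC_diff_iff[OF assms(1,2)] assms(3) by (simp add: hdist_def)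

lemma dist_rep:
  assumes v: "v \<in> vecs (na * nb)"
  obtains w where "w \<in> vecs (na * nb)" "syndrome w = syndrome v" "wt w = dist_to_code KC v"
proof -
  obtain c where c: "c \<in> KC" "dist_to_code KC v = hdist v c" using dist_attained by blast
  have "v - c \<in> vecs (na * nb)" "syndrome (v - c) = syndrome v"
    using v c(1) code_vecs by (auto simp: KC_iff syndrome_diff)
  then show ?thesis
    using c(2) by (intro that[of "v - c"]) (simp_all add: hdist_def)
qed

lemma dist_le_outer_sum:
  assumes v: "v \<in> vecs (na * nb)" and "finite Q" "\<And>p. p \<in> Q \<Longrightarrow> x p \<in> vecs ma \<and> y p \<in> vecs mb"
    and eq: "syndrome v = (\<Sum>p\<in>Q. outer (x p) (y p))"
  shows "dist_to_code KC v \<le> card Q"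
proof -
  from outer_sum_realizable[OF assms(2,3)] obtain w where w: "w \<in> vecs (na * nb)"
    and "wt w \<le> card Q \<and> syndrome w = (\<Sum>p\<in>Q. outer (x p) (y p))" ..
  then have w: "w \<in> vecs (na * nb)" "wt w \<le> card Q" "syndrome w = (\<Sum>p\<in>Q. outer (x p) (y p))"
    by simp_all
  have "dist_to_code KC v \<le> wt w"
    by (rule dist_le_wt[OF v w(1)]) (simp only: w(3) eq)
  then show ?thesis
    using w(2) by linarith
qed

text \<open>Any matrix supported on \<open>ma \<times> mb\<close> is a syndrome of weight at most \<open>min ma mb\<close>: write it as
  the sum of its rows, or of its columns.\<close>
definition mat_space :: "(nat \<Rightarrow> nat \<Rightarrow> 'a) \<Rightarrow> bool" where
  "mat_space T \<longleftrightarrow> (\<forall>t t'. ma \<le> t \<or> mb \<le> t' \<longrightarrow> T t t' = 0)"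

lemma matrix_realizable:
  assumes T: "mat_space T"
  shows "\<exists>w\<in>vecs (na * nb). wt w \<le> min ma mb \<and> syndrome w = T"
proof (cases "ma \<le> mb")
  case True
  have rows: "(\<Sum>t<ma. outer (unitv t) (\<lambda>t'. T t t')) = T"
    using T by (auto simp: fun_eq_iff sum_fun_apply outer_def unitv_def mat_space_def delta_sum not_less)
  have "\<And>t. t \<in> {..<ma} \<Longrightarrow> unitv t \<in> vecs ma \<and> (\<lambda>t'. T t t') \<in> vecs mb"
    using T by (auto simp: mat_space_def vecs_def unitv_def)
  from outer_sum_realizable[OF finite_lessThan this] obtain w where w: "w \<in> vecs (na * nb)"
    and "wt w \<le> card {..<ma} \<and> syndrome w = (\<Sum>t<ma. outer (unitv t) (\<lambda>t'. T t t'))" ..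
  then have h: "wt w \<le> min ma mb" "syndrome w = T"
    using True by (simp_all only: rows card_lessThan min_absorb1)
  show ?thesis
    by (rule bexI[of _ w]) (rule conjI h w)+
next
  case False
  have cols: "(\<Sum>t'<mb. outer (\<lambda>t. T t t') (unitv t')) = T"
    using T by (auto simp: fun_eq_iff sum_fun_apply outer_def unitv_def mat_space_def
        delta_sum_right not_less)
  have "\<And>t'. t' \<in> {..<mb} \<Longrightarrow> (\<lambda>t. T t t') \<in> vecs ma \<and> unitv t' \<in> vecs mb"
    using T by (auto simp: mat_space_def vecs_def unitv_def)
  from outer_sum_realizable[OF finite_lessThan this] obtain w where w: "w \<in> vecs (na * nb)"
    and "wt w \<le> card {..<mb} \<and> syndrome w = (\<Sum>t'<mb. outer (\<lambda>t. T t t') (unitv t'))" ..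
  then have h: "wt w \<le> min ma mb" "syndrome w = T"
    using False by (simp_all only: cols card_lessThan min_absorb2 not_le less_imp_le)
  show ?thesis
    by (rule bexI[of _ w]) (rule conjI h w)+
qed

lemma dist_le_min:
  assumes v: "v \<in> vecs (na * nb)"
  shows "dist_to_code KC v \<le> min ma mb"
proof -
  have "mat_space (syndrome v)"
    using syndrome_outside by (simp add: mat_space_def)
  then obtain w where "w \<in> vecs (na * nb)" "wt w \<le> min ma mb" "syndrome w = syndrome v"
    using matrix_realizable by blast
  then show ?thesis
    using dist_le_wt[OF v] by fastforce
qed

text \<open>Lower bound: if the first \<open>r\<close> columns of the syndrome of \<open>w\<close> are the unit vectors, these
  lie in the span of the \<open>wt w\<close> columns \<open>a (i div nb)\<close>, \<open>i \<in> supp w\<close>, so \<open>r \<le> wt w\<close>.\<close>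
lemma unit_columns_wt:
  assumes w: "w \<in> vecs (na * nb)" and cols: "\<And>t'. t' < r \<Longrightarrow> (\<lambda>t. syndrome w t t') = unitv t'"
  shows "r \<le> wt w"
proof -
  define T where "T = (\<lambda>i. a (i div nb)) ` supp w"
  have "unitv ` {..<r} \<subseteq> sv.span T"
  proof
    fix u :: "nat \<Rightarrow> 'a" assume "u \<in> unitv ` {..<r}"
    then obtain t' where t': "t' < r" "u = unitv t'" by auto
    have "u = (\<Sum>i\<in>supp w. scalev (w i * b (i mod nb) t') (a (i div nb)))"
      unfolding t'(2) cols[OF t'(1), symmetric] syndrome_outer_sum(1)[OF w]
      by (simp add: fun_eq_iff sum_fun_apply outer_def scalev_apply mult_ac)
    also have "\<dots> \<in> sv.span T"
      by (intro sv.span_sum sv.span_scale sv.span_base) (auto simp: T_def)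
    finally show "u \<in> sv.span T" .
  qed
  moreover have "finite T"
    using finite_supp[OF w] by (simp add: T_def)
  ultimately have "card (unitv ` {..<r} :: (nat \<Rightarrow> 'a) set) \<le> card T"
    using sv.independent_span_bound[OF _ unitv_independent] by blast
  moreover have "card (unitv ` {..<r} :: (nat \<Rightarrow> 'a) set) = r"
    by (simp add: card_image inj_on_subset[OF unitv_inj])
  moreover have "card T \<le> wt w"
    unfolding T_def wt_supp by (rule card_image_le[OF finite_supp[OF w]])
  ultimately show ?thesis by simp
qed

text \<open>Every distance \<open>r \<le> min ma mb\<close> occurs: take a vector whose syndrome is the identity
  matrix of rank \<open>r\<close>.\<close>
lemma dist_attains:
  assumes r: "r \<le> min ma mb"
  shows "\<exists>v\<in>vecs (na * nb). dist_to_code KC v = r"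
proof -
  have "\<And>t. t \<in> {..<r} \<Longrightarrow> unitv t \<in> vecs ma \<and> unitv t \<in> vecs mb"
    using r by (auto intro: vecs_unitv)
  from outer_sum_realizable[OF finite_lessThan this] obtain w where w: "w \<in> vecs (na * nb)"
    and "wt w \<le> card {..<r} \<and> syndrome w = (\<Sum>t<r. outer (unitv t) (unitv t))" ..
  then have w: "w \<in> vecs (na * nb)" "wt w \<le> r" "syndrome w = (\<Sum>t<r. outer (unitv t) (unitv t))"
    by simp_all
  have "dist_to_code KC w \<le> r"
    using dist_le_wt[OF w(1) w(1)] w(2) by simp
  moreover have "r \<le> dist_to_code KC w"
  proof -
    obtain w' where w': "w' \<in> vecs (na * nb)" "syndrome w' = syndrome w" "wt w' = dist_to_code KC w"
      using dist_rep[OF w(1)] by blast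
    have "(\<lambda>t. syndrome w' t t') = unitv t'" if "t' < r" for t'
      using that unfolding w'(2) w(3)
      by (auto simp: fun_eq_iff sum_fun_apply outer_def unitv_def delta_sum)
    then show ?thesis
      using unit_columns_wt[OF w'(1)] w'(3) by simp
  qed
  ultimately show ?thesis
    using w(1) by (intro bexI[of _ w]) auto
qed

lemma dist_image: "dist_to_code KC ` vecs (na * nb) = {0..min ma mb}"
proof (intro equalityI subsetI)
  fix r assume "r \<in> {0..min ma mb}"
  then obtain v where "v \<in> vecs (na * nb)" "dist_to_code KC v = r"
    using dist_attains by auto
  then show "r \<in> dist_to_code KC ` vecs (na * nb)" by blast
qed (use dist_le_min in auto)

lemma covering_radius_KC: "covering_radius (na * nb) KC = min ma mb"
  unfolding covering_radius_def dist_image by (rule Max_eqI) auto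

section \<open>Minimum distance\<close>

text \<open>A nonzero codeword of weight at most two would give a vanishing sum of at most two outer
  products whose left (or right) factors are distinct, hence independent, columns.\<close>
lemma code_wt_ge3:
  assumes c: "c \<in> KC" "c \<noteq> 0"
  shows "3 \<le> wt c"
proof (rule ccontr)
  assume "\<not> 3 \<le> wt c"
  have cv: "c \<in> vecs (na * nb)" and syn0: "syndrome c = 0"
    using c(1) by (auto simp: KC_iff)
  have fin: "finite (supp c)" and card: "card (supp c) \<le> 2"
    using finite_supp[OF cv] \<open>\<not> 3 \<le> wt c\<close> by (auto simp: wt_supp)
  have idx: "p div nb < na \<and> p mod nb < nb" if "p \<in> supp c" for p
    using supp_vecs[OF cv] that pair_index_split by blast
  obtain p0 where p0: "p0 \<in> supp c"
    using c(2) by (auto simp: supp_def fun_eq_iff)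
  then have cp0: "c p0 \<noteq> 0" by (simp add: supp_def)
  from div_or_mod_inj[OF fin card] show False
  proof
    assume "inj_on (\<lambda>p. p div nb) (supp c)"
    then have "indep_fam (\<lambda>p. a (p div nb)) (supp c)"
      using A.cols_independent_le2[OF fin card] idx by blast
    then have "scalev (c p0) (b (p0 mod nb)) = 0"
      using outer_sum_zero_indep syndrome_outer_sum(1)[OF cv] syn0 p0 by metis
    then show False
      using cp0 B.col_nonzero idx[OF p0] by (auto simp: fun_eq_iff scalev_apply)
  next
    assume "inj_on (\<lambda>p. p mod nb) (supp c)"
    then have "indep_fam (\<lambda>p. b (p mod nb)) (supp c)"
      using B.cols_independent_le2[OF fin card] idx by blast
    moreover have "transpose_mat (syndrome c)
        = (\<Sum>p\<in>supp c. outer (b (p mod nb)) (scalev (c p) (a (p div nb))))"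
      unfolding syndrome_outer_sum(2)[OF cv] by (rule transpose_outer_sum)
    then have "(\<Sum>p\<in>supp c. outer (b (p mod nb)) (scalev (c p) (a (p div nb)))) = 0"
      using syn0 by (simp add: transpose_mat_def fun_eq_iff)
    ultimately have "scalev (c p0) (a (p0 div nb)) = 0"
      using outer_sum_zero_indep p0 by metis
    then show False
      using cp0 A.col_nonzero idx[OF p0] by (auto simp: fun_eq_iff scalev_apply)
  qed
qed

text \<open>A dependent triple \<open>a 0 + a 1 = \<gamma> a j\<close> of columns of \<open>A\<close>, tensored with \<open>b 0\<close>, gives a
  codeword of weight three.\<close>
lemma code_has_wt3:
  assumes "2 \<le> na" "0 < nb"
  shows "\<exists>c\<in>KC. wt c = 3"
proof -
  obtain j \<gamma> where j: "j < na" "j \<noteq> 0" "j \<noteq> 1" "\<gamma> \<noteq> 0" and dep: "a 0 + a 1 = scalev \<gamma> (a j)"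
    using A.col_sum_third[OF assms(1)] by blast
  define c :: "nat \<Rightarrow> 'a" where "c = scalev 1 (unitv 0) + scalev 1 (unitv nb) - scalev \<gamma> (unitv (j * nb))"
  have idx: "0 < na * nb" "nb < na * nb" "j * nb < na * nb"
    using assms j(1) by (auto intro: pair_index_join[THEN conjunct1, of 1 na 0 nb, simplified])
  have "syndrome c = outer (a 0 + a 1 - scalev \<gamma> (a j)) (b 0)"
    unfolding c_def syndrome_diff syndrome_add syndrome_unit[OF idx(1)] syndrome_unit[OF idx(2)]
      syndrome_unit[OF idx(3)]
    using assms(2) by (simp add: outer_def fun_eq_iff scalev_apply algebra_simps)
  then have "syndrome c = 0"
    unfolding dep by (simp add: outer_def fun_eq_iff)
  moreover have "c \<in> vecs (na * nb)"
    unfolding c_def using idx by (intro vecs_diff vecs_add vecs_scale vecs_unitv)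
  moreover have "supp c = {0, nb, j * nb}"
    using assms(2) j(2-4) by (auto simp: c_def supp_def unitv_def scalev_apply)
  then have "wt c = 3"
    using assms(2) j(2,3) by (simp add: wt_supp)
  ultimately show ?thesis by (auto simp: KC_iff)
qed

lemma min_dist_KC:
  assumes "2 \<le> na" "0 < nb"
  shows "min_dist KC = 3"
  unfolding min_dist_def
proof (rule Min_eqI)
  show "finite {hdist x y | x y. x \<in> KC \<and> y \<in> KC \<and> x \<noteq> y}"
    using finite_code by (auto intro: finite_subset[of _ "(\<lambda>(x, y). hdist x y) ` (KC \<times> KC)"])
next
  fix d assume "d \<in> {hdist x y | x y. x \<in> KC \<and> y \<in> KC \<and> x \<noteq> y}"
  then show "3 \<le> d"
    using code_wt_ge3 code_diff by (auto simp: hdist_def)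
next
  obtain c where "c \<in> KC" "wt c = 3" using code_has_wt3[OF assms] by blast
  then show "3 \<in> {hdist x y | x y. x \<in> KC \<and> y \<in> KC \<and> x \<noteq> y}"
    using code_zero by (intro CollectI exI[of _ c] exI[of _ 0]) (auto simp: hdist_def wt_supp supp_def)
qed

section \<open>Dimension\<close>

lemma pcm_syndrome_onto:
  assumes y: "y \<in> vecs (ma * mb)"
  shows "\<exists>v\<in>vecs (na * nb). pcm_syndrome (ma * mb) (na * nb) (kron mb nb A B) v = y"
proof -
  define T where "T = (\<lambda>t t'. if t < ma \<and> t' < mb then y (t * mb + t') else 0)"
  have "mat_space T" by (auto simp: T_def mat_space_def)
  then obtain w where w: "w \<in> vecs (na * nb)" "syndrome w = T"
    using matrix_realizable by blast
  have "pcm_syndrome (ma * mb) (na * nb) (kron mb nb A B) w r = y r" for r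
  proof (cases "r < ma * mb")
    case True
    then show ?thesis
      using pair_index_split[OF True] by (simp add: pcm_syndrome_kron w(2) T_def)
  next
    case False
    then show ?thesis
      using y by (simp add: pcm_syndrome_kron vecs_def)
  qed
  then show ?thesis using w(1) by blast
qed

lemma dim_KC: "sv.dim KC = na * nb - ma * mb"
  using pcm_syndrome_onto by (rule code_dim_of_pcm)

section \<open>Minimal representatives\<close>

text \<open>If the syndrome of \<open>v\<close> is a sum of exactly \<open>dist_to_code KC v\<close> outer products, both
  families of factors are independent: otherwise one term could be absorbed, giving a vector of
  smaller weight with the same syndrome.\<close>
lemma minimal_outer_sum_independent:
  assumes v: "v \<in> vecs (na * nb)" and fin: "finite Q"
    and xy: "\<And>p. p \<in> Q \<Longrightarrow> x p \<in> vecs ma \<and> y p \<in> vecs mb"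
    and eq: "syndrome v = (\<Sum>p\<in>Q. outer (x p) (y p))" and min: "dist_to_code KC v = card Q"
  shows "indep_fam x Q" and "indep_fam y Q"
proof -
  have shorter: "False" if "p0 \<in> Q" "\<And>p. p \<in> Q - {p0} \<Longrightarrow> x' p \<in> vecs ma \<and> y' p \<in> vecs mb"
    "syndrome v = (\<Sum>p\<in>Q - {p0}. outer (x' p) (y' p))" for p0 x' y'
  proof -
    have "dist_to_code KC v \<le> card (Q - {p0})"
      using dist_le_outer_sum[OF v _ that(2,3)] fin by blast
    then show False
      using min that(1) fin card_Diff1_less[OF fin that(1)] by linarith
  qed
  show "indep_fam x Q"
  proof (rule ccontr)
    assume "\<not> indep_fam x Q"
    then obtain c p0 where dep: "(\<Sum>p\<in>Q. scalev (c p) (x p)) = 0" "p0 \<in> Q" "c p0 \<noteq> 0"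
      by (auto simp: indep_fam_def)
    show False
      using outer_sum_drop_left[OF fin dep(2,3,1), of y] eq xy xy[OF dep(2)]
      by (intro shorter[OF dep(2)]) (auto intro!: vecs_add vecs_diff vecs_scale)
  qed
  show "indep_fam y Q"
  proof (rule ccontr)
    assume "\<not> indep_fam y Q"
    then obtain c p0 where dep: "(\<Sum>p\<in>Q. scalev (c p) (y p)) = 0" "p0 \<in> Q" "c p0 \<noteq> 0"
      by (auto simp: indep_fam_def)
    show False
      using outer_sum_drop_right[OF fin dep(2,3,1), of x] eq xy xy[OF dep(2)]
      by (intro shorter[OF dep(2)]) (auto intro!: vecs_add vecs_diff vecs_scale)
  qed
qed

lemma minimal_rep_independent:
  assumes v: "v \<in> vecs (na * nb)" and w: "w \<in> vecs (na * nb)"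
    and syn: "syndrome w = syndrome v" and wt: "wt w = dist_to_code KC v"
  shows "indep_fam (\<lambda>p. a (p div nb)) (supp w)" and "indep_fam (\<lambda>p. b (p mod nb)) (supp w)"
proof -
  have min: "dist_to_code KC v = card (supp w)" using wt by (simp add: wt_supp)
  show "indep_fam (\<lambda>p. a (p div nb)) (supp w)"
    using syndrome_outer_sum(1)[OF w] syn
    by (intro minimal_outer_sum_independent(1)[OF v finite_supp[OF w] _ _ min]) auto
  show "indep_fam (\<lambda>p. b (p mod nb)) (supp w)"
    using syndrome_outer_sum(2)[OF w] syn
    by (intro minimal_outer_sum_independent(2)[OF v finite_supp[OF w] _ _ min]) auto
qed

section \<open>Automorphisms induced by automorphisms of the column spaces\<close>

text \<open>Column permutations \<open>\<pi>, \<pi>'\<close> with nonzero scalings \<open>\<alpha>, \<beta>\<close> of \<open>A\<close> and \<open>B\<close> combine to a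
  monomial matrix acting on coordinates \<open>i \<mapsto> \<pi> (i div nb) * nb + \<pi>' (i mod nb)\<close>.\<close>
lemma kron_monomial:
  assumes \<pi>: "\<forall>s<na. \<pi> s < na" "inj_on \<pi> {..<na}" and \<pi>': "\<forall>s<nb. \<pi>' s < nb" "inj_on \<pi>' {..<nb}"
    and \<alpha>: "\<forall>s<na. \<alpha> s \<noteq> 0" and \<beta>: "\<forall>s<nb. \<beta> s \<noteq> 0"
  shows "\<exists>M. monomial_mat (na * nb) M \<and> (\<forall>x. syndrome (vecmat (na * nb) M x) = (\<lambda>t t'.
    \<Sum>i<na * nb. x i * (\<alpha> (i div nb) * a (\<pi> (i div nb)) t) * (\<beta> (i mod nb) * b (\<pi>' (i mod nb)) t')))"
proof -
  define \<tau> where "\<tau> i = \<pi> (i div nb) * nb + \<pi>' (i mod nb)" for i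
  have \<tau>: "\<tau> i < na * nb \<and> \<tau> i div nb = \<pi> (i div nb) \<and> \<tau> i mod nb = \<pi>' (i mod nb)"
    if "i < na * nb" for i
    unfolding \<tau>_def using pair_index_split[OF that] \<pi>(1) \<pi>'(1) by (intro pair_index_join) auto
  have "inj_on \<tau> {..<na * nb}"
  proof (rule inj_onI)
    fix i i' assume i: "i \<in> {..<na * nb}" "i' \<in> {..<na * nb}" and eq: "\<tau> i = \<tau> i'"
    have "i div nb = i' div nb" "i mod nb = i' mod nb"
      using \<tau>[of i] \<tau>[of i'] i eq pair_index_split inj_onD[OF \<pi>(2)] inj_onD[OF \<pi>'(2)]
      by (metis lessThan_iff)+
    then show "i = i'" by (metis div_mult_mod_eq)
  qed
  then have bij: "bij_betw \<tau> {..<na * nb} {..<na * nb}"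
    using \<tau> by (intro bij_betw_imageI endo_inj_surj) auto
  define d where "d i = \<alpha> (i div nb) * \<beta> (i mod nb)" for i
  have d: "d i \<noteq> 0" if "i < na * nb" for i
    using pair_index_split[OF that] \<alpha> \<beta> by (simp add: d_def)
  define M where "M = (\<lambda>i j. if i < na * nb \<and> j = \<tau> i then d i else 0)"
  have "syndrome (vecmat (na * nb) M x) t t' =
      (\<Sum>i<na * nb. x i * (\<alpha> (i div nb) * a (\<pi> (i div nb)) t) * (\<beta> (i mod nb) * b (\<pi>' (i mod nb)) t'))"
    for x t t'
  proof -
    have "syndrome (vecmat (na * nb) M x) t t'
        = (\<Sum>j<na * nb. vecmat (na * nb) M x j * (a (j div nb) t * b (j mod nb) t'))"
      by (simp add: syndrome_def mult.assoc)
    also have "\<dots> = (\<Sum>i<na * nb. x i * d i * (a (\<tau> i div nb) t * b (\<tau> i mod nb) t'))"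
      unfolding M_def by (rule monomial_mat_of_perm(2)[OF bij d])
    also have "\<dots> = (\<Sum>i<na * nb. x i * (\<alpha> (i div nb) * a (\<pi> (i div nb)) t) * (\<beta> (i mod nb) * b (\<pi>' (i mod nb)) t'))"
      by (rule sum.cong) (simp_all add: \<tau> d_def mult_ac)
    finally show ?thesis .
  qed
  moreover have "monomial_mat (na * nb) M"
    unfolding M_def by (rule monomial_mat_of_perm(1)[OF bij d])
  ultimately show ?thesis by blast
qed

lemma syndrome_linear_image:
  assumes g: "Vector_Spaces.linear scalev scalev g" and h: "Vector_Spaces.linear scalev scalev h"
  shows "(\<Sum>i<na * nb. x i * g (a (i div nb)) t * h (b (i mod nb)) t') = mat_sandwich g h (syndrome x) t t'"
proof -
  have col: "(\<lambda>k. syndrome x k l) = (\<Sum>i<na * nb. scalev (x i * b (i mod nb) l) (a (i div nb)))" for l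
    by (simp add: fun_eq_iff syndrome_def sum_fun_apply scalev_apply mult_ac)
  have "g (\<lambda>k. syndrome x k l) t = (\<Sum>i<na * nb. x i * b (i mod nb) l * g (a (i div nb)) t)" for l
    unfolding col by (simp add: svp.linear_sum[OF g] svp.linear_scale[OF g] sum_fun_apply scalev_apply)
  then have row: "(\<lambda>l. g (\<lambda>k. syndrome x k l) t) = (\<Sum>i<na * nb. scalev (x i * g (a (i div nb)) t) (b (i mod nb)))"
    by (simp add: fun_eq_iff sum_fun_apply scalev_apply mult_ac)
  show ?thesis
    unfolding mat_sandwich_def row
    by (simp add: svp.linear_sum[OF h] svp.linear_scale[OF h] sum_fun_apply scalev_apply mult_ac)
qed

lemma aut_of_column_automorphisms:
  assumes g: "Vector_Spaces.linear scalev scalev g" "g ` vecs ma = vecs ma" "inj_on g (vecs ma)"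
    and h: "Vector_Spaces.linear scalev scalev h" "h ` vecs mb = vecs mb" "inj_on h (vecs mb)"
  shows "\<exists>\<phi>\<in>aut_group (na * nb) KC. \<forall>x. syndrome (\<phi> x) = mat_sandwich g h (syndrome x)"
proof -
  obtain \<pi> \<alpha> where \<pi>: "\<forall>s<na. \<pi> s < na \<and> \<alpha> s \<noteq> 0 \<and> g (a s) = scalev (\<alpha> s) (a (\<pi> s))" "inj_on \<pi> {..<na}"
    using A.automorphism_permutes_cols[OF g] by blast
  obtain \<pi>' \<beta> where \<pi>': "\<forall>s<nb. \<pi>' s < nb \<and> \<beta> s \<noteq> 0 \<and> h (b s) = scalev (\<beta> s) (b (\<pi>' s))" "inj_on \<pi>' {..<nb}"
    using B.automorphism_permutes_cols[OF h] by blast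
  obtain M where M: "monomial_mat (na * nb) M" and syn: "\<And>x. syndrome (vecmat (na * nb) M x) = (\<lambda>t t'.
      \<Sum>i<na * nb. x i * (\<alpha> (i div nb) * a (\<pi> (i div nb)) t) * (\<beta> (i mod nb) * b (\<pi>' (i mod nb)) t'))"
    using kron_monomial[of \<pi> \<pi>' \<alpha> \<beta>] \<pi> \<pi>' by auto
  have syn_gh: "syndrome (vecmat (na * nb) M x) = mat_sandwich g h (syndrome x)" for x
  proof (intro ext)
    fix t t'
    have "syndrome (vecmat (na * nb) M x) t t' = (\<Sum>i<na * nb. x i * g (a (i div nb)) t * h (b (i mod nb)) t')"
      unfolding syn
    proof (rule sum.cong[OF refl])
      fix i assume "i \<in> {..<na * nb}"
      then have "i div nb < na" "i mod nb < nb" using pair_index_split by auto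
      then show "x i * (\<alpha> (i div nb) * a (\<pi> (i div nb)) t) * (\<beta> (i mod nb) * b (\<pi>' (i mod nb)) t')
          = x i * g (a (i div nb)) t * h (b (i mod nb)) t'"
        using \<pi>(1) \<pi>'(1) by (simp add: scalev_apply)
    qed
    then show "syndrome (vecmat (na * nb) M x) t t' = mat_sandwich g h (syndrome x) t t'"
      using syndrome_linear_image[OF g(1) h(1)] by simp
  qed
  have "vecmat (na * nb) M c \<in> KC" if "c \<in> KC" for c
  proof -
    have "syndrome c = 0" using that by (simp add: KC_iff)
    then have "syndrome (vecmat (na * nb) M c) = 0"
      by (simp add: syn_gh mat_sandwich_zero[OF g(1) h(1)])
    then show ?thesis by (simp add: KC_iff vecmat_vecs)
  qed
  then have "vecmat (na * nb) M \<in> aut_group (na * nb) KC"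
    using M by (intro aut_group.mono) auto
  then show ?thesis using syn_gh by blast
qed

section \<open>Complete transitivity\<close>

text \<open>Two minimal representatives of equal weight are matched term by term: a linear automorphism
  \<open>g\<close> carries the columns \<open>a\<close> of the first onto those of the second and \<open>h\<close> does the same for
  the columns \<open>b\<close>, absorbing the coefficients.\<close>
lemma transport_minimal_rep:
  assumes w: "w \<in> vecs (na * nb)" and w': "w' \<in> vecs (na * nb)" and \<beta>: "bij_betw \<beta> (supp w) (supp w')"
    and g: "Vector_Spaces.linear scalev scalev g" "\<forall>p\<in>supp w. g (a (p div nb)) = a (\<beta> p div nb)"
    and h: "Vector_Spaces.linear scalev scalev h"
      "\<forall>p\<in>supp w. h (b (p mod nb)) = scalev (w' (\<beta> p) / w p) (b (\<beta> p mod nb))"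
  shows "mat_sandwich g h (syndrome w) = syndrome w'"
proof (intro ext)
  fix t t'
  have "mat_sandwich g h (syndrome w) t t' = (\<Sum>i<na * nb. w i * (g (a (i div nb)) t * h (b (i mod nb)) t'))"
    using syndrome_linear_image[OF g(1) h(1)] by (simp add: mult.assoc)
  also have "\<dots> = (\<Sum>p\<in>supp w. w p * (g (a (p div nb)) t * h (b (p mod nb)) t'))"
    by (rule sum_supp[OF w])
  also have "\<dots> = (\<Sum>p\<in>supp w. w' (\<beta> p) * (a (\<beta> p div nb) t * b (\<beta> p mod nb) t'))"
    using g(2) h(2) by (intro sum.cong) (auto simp: supp_def scalev_apply)
  also have "\<dots> = (\<Sum>p'\<in>supp w'. w' p' * (a (p' div nb) t * b (p' mod nb) t'))"
    by (rule sum.reindex_bij_betw[OF \<beta>])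
  also have "\<dots> = syndrome w' t t'"
    unfolding syndrome_def mult.assoc by (rule sum_supp[OF w', symmetric])
  finally show "mat_sandwich g h (syndrome w) t t' = syndrome w' t t'" .
qed

theorem KC_coset_transitive: coset_transitive
  unfolding coset_transitive_def
proof (intro ballI impI)
  fix v u assume v: "v \<in> vecs (na * nb)" and u: "u \<in> vecs (na * nb)"
    and d: "dist_to_code KC v = dist_to_code KC u"
  obtain w where w: "w \<in> vecs (na * nb)" "syndrome w = syndrome v" "wt w = dist_to_code KC v"
    using dist_rep[OF v] by blast
  obtain w' where w': "w' \<in> vecs (na * nb)" "syndrome w' = syndrome u" "wt w' = dist_to_code KC u"
    using dist_rep[OF u] by blast
  obtain \<beta> where \<beta>: "bij_betw \<beta> (supp w) (supp w')"
    using finite_same_card_bij[OF finite_supp[OF w(1)] finite_supp[OF w'(1)]] w(3) w'(3) d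
    by (auto simp: wt_supp)
  have nz: "\<And>p. p \<in> supp w \<Longrightarrow> w' (\<beta> p) / w p \<noteq> 0"
    using \<beta> by (auto simp: bij_betw_def supp_def)
  obtain g where g: "Vector_Spaces.linear scalev scalev g" "g ` vecs ma = vecs ma" "inj_on g (vecs ma)"
      "\<forall>p\<in>supp w. g (a (p div nb)) = a (\<beta> p div nb)"
    using indep_fam_extend_automorphism[OF finite_supp[OF w(1)] minimal_rep_independent(1)[OF v w(1,2,3)]
        indep_fam_reindex[OF \<beta> minimal_rep_independent(1)[OF u w'(1,2,3)], of "\<lambda>_. 1"], where m=ma]
    by auto
  obtain h where h: "Vector_Spaces.linear scalev scalev h" "h ` vecs mb = vecs mb" "inj_on h (vecs mb)"
      "\<forall>p\<in>supp w. h (b (p mod nb)) = scalev (w' (\<beta> p) / w p) (b (\<beta> p mod nb))"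
    using indep_fam_extend_automorphism[OF finite_supp[OF w(1)] minimal_rep_independent(2)[OF v w(1,2,3)]
        indep_fam_reindex[where d="\<lambda>p. w' (\<beta> p) / w p", OF \<beta> minimal_rep_independent(2)[OF u w'(1,2,3)] nz], where m=mb]
    by auto
  obtain \<phi> where \<phi>: "\<phi> \<in> aut_group (na * nb) KC"
    and syn: "\<And>x. syndrome (\<phi> x) = mat_sandwich g h (syndrome x)"
    using aut_of_column_automorphisms[OF g(1-3) h(1-3)] by blast
  have "syndrome (\<phi> v) = syndrome u"
    unfolding syn w(2)[symmetric] w'(2)[symmetric]
    using transport_minimal_rep[OF w(1) w'(1) \<beta> g(1,4) h(1,4)] by simp
  moreover have "\<phi> v \<in> vecs (na * nb)"
    using aut_group_isometry[OF \<phi>] v by (simp add: code_isometry_def)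
  ultimately show "\<exists>\<phi>\<in>aut_group (na * nb) KC. \<phi> v - u \<in> KC"
    using \<phi> KC_diff_iff[OF _ u] by blast
qed

end

theorem theorem1:
  fixes A B :: "nat \<Rightarrow> nat \<Rightarrow> 'a::{field,finite}"
    and ma mb na nb :: nat
  defines "q \<equiv> card (UNIV :: 'a set)"
  assumes hA: "hamming_pcm ma na A" and hB: "hamming_pcm mb nb B"
    and na_def: "na = (q ^ ma - 1) div (q - 1)" and nb_def: "nb = (q ^ mb - 1) div (q - 1)"
    and na3: "na \<ge> 3" and nb3: "nb \<ge> 3"
  shows "let n = na * nb; C = code_of_pcm (ma * mb) n (kron mb nb A B) in
           C \<subseteq> vecs n \<and> code_dim C = n - ma * mb \<and> min_dist C = 3
         \<and> covering_radius n C = min ma mb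
         \<and> completely_transitive n C \<and> completely_regular n C"
proof -
  interpret kron_code ma na A mb nb B
    by unfold_locales (fact hA hB)+
  have "card (coset_orbits (na * nb) KC) = min ma mb + 1"
    using card_coset_orbits[OF KC_coset_transitive] by (simp add: dist_image)
  moreover have "min_dist KC = 3"
    using na3 nb3 by (intro min_dist_KC) simp_all
  ultimately show ?thesis
    unfolding Let_def completely_transitive_def code_dim_def covering_radius_KC
    using code_vecs dim_KC completely_regular_if_transitive[OF KC_coset_transitive] by simp
qed

end
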